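(* Let $\mathcal X\subset\mathbb R^d$ be compact, let $\mathcal P$ be a set of Borel probability measures on $\mathcal X$ that is compact in the weak* topology, and let $\sigma:\mathbb R\to\mathbb R$ be continuous and not a polynomial. Then for every continuous $f:\mathcal P\to\mathbb R$ and every $\epsilon>0$ there exist $k,m\in\mathbb N$, $W_3\in\mathbb R^{k\times d}$, $b_3\in\mathbb R^k$, $W_2\in\mathbb R^{m\times k}$, $b_2\in\mathbb R^m$, $w_1\in\mathbb R^m$, $b_1\in\mathbb R$ such that $$\sup_{p\in\mathcal P}\Big|f(p)-\Big(w_1^{\mathrm T}\sigma\Big(W_2\int_{\mathcal X}\sigma(W_3x+b_3)\,\mathrm dp(x)+b_2\Big)+b_1\Big)\Big|<\epsilon,$$ where $\sigma$ and the integral are applied componentwise.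
   Context: The weak* topology on Borel probability measures on the compact set $\mathcal X$ is the coarsest topology making every map $p\mapsto\int g\,\mathrm dp$, $g\in C(\mathcal X)$, continuous. (A finite sample $\{x_1,\dots,x_l\}$ corresponds to $p=\frac1l\sum_i\delta_{x_i}$, for which the integral equals the mean $\frac1l\sum_i\sigma(W_3x_i+b_3)$.) *)

theory Defs
  imports "HOL-Probability.Probability" "HOL-Computational_Algebra.Polynomial"
begin

definition borel_prob_measures :: "'a::euclidean_space set \<Rightarrow> 'a measure set" where
  "borel_prob_measures X = {p. prob_space p \<and> sets p = sets (restrict_space borel X)}"

definition weak_star_topology :: "'a::euclidean_space set \<Rightarrow> 'a measure topology" where
  "weak_star_topology X =
     subtopology
       (topology_generated_by
          {{p. (\<integral>x. g x \<partial>p) \<in> U} | g U. continuous_on X g \<and> open (U :: real set)})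
       (borel_prob_measures X)"

definition is_polynomial_fun :: "(real \<Rightarrow> real) \<Rightarrow> bool" where
  "is_polynomial_fun s \<longleftrightarrow> (\<exists>q :: real poly. \<forall>x. s x = poly q x)"

end

theory Submission
  imports Defs
begin

text \<open>
  The map \<open>p \<mapsto> (\<integral>g dp)\<^sub>g\<close> from the weak-star compact set \<open>PP\<close> into a product of real lines is
  continuous, and \<open>f\<close> factors continuously through its compact Hausdorff image. By Stone--Weierstrass
  for the algebra spanned by exponentials of the (additive, separating) functionals \<open>p \<mapsto> \<integral>g dp\<close>,
  \<open>f\<close> is uniformly close to a finite sum \<open>\<Sum>\<^sub>i c\<^sub>i exp (\<integral>g\<^sub>i dp)\<close>.

  Every continuous \<open>g\<close> on the compact set \<open>X\<close> is uniformly approximated by a network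
  \<open>\<Sum> a \<sigma>(w\<bullet>x + b)\<close>: again by Stone--Weierstrass it suffices to approximate \<open>exp (w\<bullet>x)\<close>, i.e. \<open>exp\<close> on
  intervals, and shallow \<open>\<sigma>\<close>-networks approximate all monomials \<open>t\<^sup>k\<close> because \<open>\<sigma>\<close> is not a polynomial
  (smoothed \<open>k\<close>-th differences of \<open>\<sigma>\<close> do not vanish, and differentiating \<open>\<sigma>(w t + b)\<close> in \<open>w\<close>
  brings down powers of \<open>t\<close>). Integrating against \<open>p\<close> turns this into a hidden layer whose
  averages approximate \<open>\<integral>g dp\<close>; an outer layer approximates \<open>c exp\<close> on the resulting bounded range,
  and sums of such two-layer networks are again of this form.
\<close>

definition shallow_net :: "(real \<Rightarrow> real) \<Rightarrow> (real \<times> real \<times> real) list \<Rightarrow> real \<Rightarrow> real" where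
  "shallow_net \<sigma> V t = (\<Sum>(v, a, b)\<leftarrow>V. v * \<sigma> (a * t + b))"

definition shallow_approx :: "(real \<Rightarrow> real) \<Rightarrow> (real \<Rightarrow> real) set" where
  "shallow_approx \<sigma> =
     {g. \<forall>R>0. \<forall>e>0. \<exists>V. \<forall>t. \<bar>t\<bar> \<le> R \<longrightarrow> \<bar>g t - shallow_net \<sigma> V t\<bar> < e}"

lemma shallow_approxI:
  "(\<And>R e. R > 0 \<Longrightarrow> e > 0 \<Longrightarrow> \<exists>V. \<forall>t. \<bar>t\<bar> \<le> R \<longrightarrow> \<bar>g t - shallow_net \<sigma> V t\<bar> < e)
    \<Longrightarrow> g \<in> shallow_approx \<sigma>"
  unfolding shallow_approx_def by blast

lemma shallow_approxD:
  "g \<in> shallow_approx \<sigma> \<Longrightarrow> R > 0 \<Longrightarrow> e > 0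
    \<Longrightarrow> \<exists>V. \<forall>t. \<bar>t\<bar> \<le> R \<longrightarrow> \<bar>g t - shallow_net \<sigma> V t\<bar> < e"
  unfolding shallow_approx_def by blast

lemma shallow_net_append: "shallow_net \<sigma> (V @ W) t = shallow_net \<sigma> V t + shallow_net \<sigma> W t"
  by (simp add: shallow_net_def)

lemma shallow_net_scale: "shallow_net \<sigma> (map (\<lambda>(v, a, b). (c * v, a, b)) V) t = c * shallow_net \<sigma> V t"
  by (induction V) (auto simp: shallow_net_def algebra_simps)

lemma shallow_net_affine:
  "shallow_net \<sigma> (map (\<lambda>(v, a, b). (v, a * w, a * c + b)) V) t = shallow_net \<sigma> V (w * t + c)"
  by (induction V) (auto simp: shallow_net_def algebra_simps)

lemma shallow_approx_closedI:
  assumes "\<And>R e. R > 0 \<Longrightarrow> e > 0 \<Longrightarrow> \<exists>h\<in>shallow_approx \<sigma>. \<forall>t. \<bar>t\<bar> \<le> R \<longrightarrow> \<bar>g t - h t\<bar> < e"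
  shows "g \<in> shallow_approx \<sigma>"
proof (rule shallow_approxI)
  fix R e :: real assume R: "R > 0" and e: "e > 0"
  obtain h where h: "h \<in> shallow_approx \<sigma>" and gh: "\<forall>t. \<bar>t\<bar> \<le> R \<longrightarrow> \<bar>g t - h t\<bar> < e/2"
    using assms[OF R, of "e/2"] e by auto
  obtain V where "\<forall>t. \<bar>t\<bar> \<le> R \<longrightarrow> \<bar>h t - shallow_net \<sigma> V t\<bar> < e/2"
    using shallow_approxD[OF h R, of "e/2"] e by auto
  with gh have "\<bar>g t - shallow_net \<sigma> V t\<bar> < e" if "\<bar>t\<bar> \<le> R" for t
    using that unfolding abs_less_iff by force
  then show "\<exists>V. \<forall>t. \<bar>t\<bar> \<le> R \<longrightarrow> \<bar>g t - shallow_net \<sigma> V t\<bar> < e" by blast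
qed

lemma shallow_approx_add:
  assumes "g \<in> shallow_approx \<sigma>" "h \<in> shallow_approx \<sigma>"
  shows "(\<lambda>t. g t + h t) \<in> shallow_approx \<sigma>"
proof (rule shallow_approxI)
  fix R e :: real assume R: "R > 0" and e: "e > 0"
  obtain V where V: "\<forall>t. \<bar>t\<bar> \<le> R \<longrightarrow> \<bar>g t - shallow_net \<sigma> V t\<bar> < e/2"
    using shallow_approxD[OF assms(1) R, of "e/2"] e by auto
  obtain W where W: "\<forall>t. \<bar>t\<bar> \<le> R \<longrightarrow> \<bar>h t - shallow_net \<sigma> W t\<bar> < e/2"
    using shallow_approxD[OF assms(2) R, of "e/2"] e by auto
  have "\<bar>g t + h t - shallow_net \<sigma> (V @ W) t\<bar> < e" if "\<bar>t\<bar> \<le> R" for t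
    using V W that unfolding shallow_net_append abs_less_iff by force
  then show "\<exists>V. \<forall>t. \<bar>t\<bar> \<le> R \<longrightarrow> \<bar>g t + h t - shallow_net \<sigma> V t\<bar> < e" by blast
qed

lemma shallow_approx_scale:
  assumes "g \<in> shallow_approx \<sigma>"
  shows "(\<lambda>t. c * g t) \<in> shallow_approx \<sigma>"
proof (rule shallow_approxI)
  fix R e :: real assume R: "R > 0" and e: "e > 0"
  define e' where "e' = e / (\<bar>c\<bar> + 1)"
  have e': "e' > 0" "\<bar>c\<bar> * e' < e"
    unfolding e'_def using e by (auto simp: field_simps add_nonneg_pos)
  obtain V where V: "\<forall>t. \<bar>t\<bar> \<le> R \<longrightarrow> \<bar>g t - shallow_net \<sigma> V t\<bar> < e'"
    using shallow_approxD[OF assms R e'(1)] by blast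
  have "\<bar>c * g t - shallow_net \<sigma> (map (\<lambda>(v, a, b). (c * v, a, b)) V) t\<bar> < e" if "\<bar>t\<bar> \<le> R" for t
  proof -
    have "\<bar>c * g t - shallow_net \<sigma> (map (\<lambda>(v, a, b). (c * v, a, b)) V) t\<bar>
        = \<bar>c\<bar> * \<bar>g t - shallow_net \<sigma> V t\<bar>"
      unfolding shallow_net_scale by (simp add: abs_mult[symmetric] right_diff_distrib)
    also have "\<dots> \<le> \<bar>c\<bar> * e'" using V that by (intro mult_left_mono) auto
    finally show ?thesis using e'(2) by linarith
  qed
  then show "\<exists>V. \<forall>t. \<bar>t\<bar> \<le> R \<longrightarrow> \<bar>c * g t - shallow_net \<sigma> V t\<bar> < e" by blast
qed

lemma shallow_approx_diff:
  assumes "g \<in> shallow_approx \<sigma>" "h \<in> shallow_approx \<sigma>"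
  shows "(\<lambda>t. g t - h t) \<in> shallow_approx \<sigma>"
  using shallow_approx_add[OF assms(1) shallow_approx_scale[OF assms(2), of "-1"]] by simp

lemma shallow_approx_sum:
  assumes "\<And>i. i \<in> A \<Longrightarrow> f i \<in> shallow_approx \<sigma>"
  shows "(\<lambda>t. \<Sum>i\<in>A. f i t) \<in> shallow_approx \<sigma>"
  using assms
proof (induction A rule: infinite_finite_induct)
  case (insert x F)
  then have "(\<lambda>t. f x t + (\<Sum>i\<in>F. f i t)) \<in> shallow_approx \<sigma>"
    by (intro shallow_approx_add) auto
  then show ?case using insert(1,2) by simp
qed (auto intro!: shallow_approxI exI[of _ "[]"] simp: shallow_net_def)

lemma shallow_approx_affine:
  assumes "g \<in> shallow_approx \<sigma>"
  shows "(\<lambda>t. g (w * t + c)) \<in> shallow_approx \<sigma>"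
proof (rule shallow_approxI)
  fix R e :: real assume R: "R > 0" and e: "e > 0"
  define R' where "R' = \<bar>w\<bar> * R + \<bar>c\<bar> + 1"
  have "R' > 0" unfolding R'_def using R by (simp add: add_nonneg_pos)
  then obtain V where V: "\<forall>t. \<bar>t\<bar> \<le> R' \<longrightarrow> \<bar>g t - shallow_net \<sigma> V t\<bar> < e"
    using shallow_approxD[OF assms _ e] by blast
  have "\<bar>w * t + c\<bar> \<le> R'" if "\<bar>t\<bar> \<le> R" for t
  proof -
    have "\<bar>w * t + c\<bar> \<le> \<bar>w\<bar> * \<bar>t\<bar> + \<bar>c\<bar>" using abs_triangle_ineq[of "w * t" c] by (simp add: abs_mult)
    also have "\<dots> \<le> \<bar>w\<bar> * R + \<bar>c\<bar>" using that by (simp add: mult_left_mono)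
    finally show ?thesis unfolding R'_def by linarith
  qed
  then have "\<forall>t. \<bar>t\<bar> \<le> R \<longrightarrow>
      \<bar>g (w * t + c) - shallow_net \<sigma> (map (\<lambda>(v, a, b). (v, a * w, a * c + b)) V) t\<bar> < e"
    using V unfolding shallow_net_affine by blast
  then show "\<exists>V. \<forall>t. \<bar>t\<bar> \<le> R \<longrightarrow> \<bar>g (w * t + c) - shallow_net \<sigma> V t\<bar> < e" ..
qed

lemma shallow_approx_activation: "\<sigma> \<in> shallow_approx \<sigma>"
  by (rule shallow_approxI, rule exI[of _ "[(1, 1, 0)]"]) (simp add: shallow_net_def)

lemma MVT_between:
  fixes g g' :: "real \<Rightarrow> real"
  assumes "\<And>x. (g has_real_derivative g' x) (at x)"
  shows "\<exists>\<xi>. \<bar>\<xi> - x\<bar> \<le> \<bar>y - x\<bar> \<and> g y - g x = (y - x) * g' \<xi>"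
proof (cases x y rule: linorder_cases)
  case less
  then obtain z where "x < z" "z < y" "g y - g x = (y - x) * g' z"
    using MVT2[of x y g g'] assms by blast
  then show ?thesis by (intro exI[of _ z]) auto
next
  case greater
  then obtain z where "y < z" "z < x" "g x - g y = (x - y) * g' z"
    using MVT2[of y x g g'] assms by blast
  then show ?thesis by (intro exI[of _ z]) (auto simp: algebra_simps)
qed auto

lemma uniformly_continuous_on_real_interval:
  fixes f :: "real \<Rightarrow> real"
  assumes "continuous_on UNIV f" "e > 0"
  shows "\<exists>d>0. \<forall>x y. \<bar>x\<bar> \<le> R \<longrightarrow> \<bar>y\<bar> \<le> R \<longrightarrow> \<bar>y - x\<bar> < d \<longrightarrow> \<bar>f y - f x\<bar> < e"
proof -
  have "uniformly_continuous_on {-R..R} f"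
    by (rule compact_uniformly_continuous) (auto intro: continuous_on_subset[OF assms(1)])
  then obtain d where "d > 0"
      and "\<forall>x\<in>{-R..R}. \<forall>x'\<in>{-R..R}. dist x' x < d \<longrightarrow> dist (f x') (f x) < e"
    using assms(2) unfolding uniformly_continuous_on_def by metis
  then show ?thesis by (auto simp: dist_real_def abs_le_iff)
qed

text \<open>Differentiating \<open>t\<^sup>j g(w t + b)\<close> with respect to the weight \<open>w\<close> multiplies it by \<open>t\<close>;
  the difference quotients in \<open>w\<close> are themselves shallow networks.\<close>

lemma shallow_approx_weight_derivative:
  fixes g g' :: "real \<Rightarrow> real"
  assumes g: "\<And>x. (g has_real_derivative g' x) (at x)" and g'_cont: "continuous_on UNIV g'"
    and approx: "\<And>w b. (\<lambda>t. t ^ j * g (w * t + b)) \<in> shallow_approx \<sigma>"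
  shows "(\<lambda>t. t ^ Suc j * g' (w * t + b)) \<in> shallow_approx \<sigma>"
proof (rule shallow_approx_closedI)
  fix R e :: real assume R: "R > 0" and e: "e > 0"
  define R1 where "R1 = (\<bar>w\<bar> + 1) * R + \<bar>b\<bar>"
  define e1 where "e1 = e / (R ^ Suc j + 1)"
  have e1: "e1 > 0" "R ^ Suc j * e1 < e"
    unfolding e1_def using e R by (auto simp: field_simps add_pos_pos)
  obtain d where d: "d > 0"
    and g'_uc: "\<forall>x y. \<bar>x\<bar> \<le> R1 \<longrightarrow> \<bar>y\<bar> \<le> R1 \<longrightarrow> \<bar>y - x\<bar> < d \<longrightarrow> \<bar>g' y - g' x\<bar> < e1"
    using uniformly_continuous_on_real_interval[OF g'_cont e1(1)] by blast
  define \<delta> where "\<delta> = min 1 (d / (2 * (R + 1)))"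
  have \<delta>: "\<delta> > 0" "\<delta> \<le> 1" "\<delta> * R < d"
  proof -
    show "\<delta> > 0" "\<delta> \<le> 1" unfolding \<delta>_def using d R by auto
    have "\<delta> * R \<le> (d / (2 * (R + 1))) * R" unfolding \<delta>_def using R by (intro mult_right_mono) auto
    also have "\<dots> < d" using d R by (simp add: field_simps add_pos_pos)
    finally show "\<delta> * R < d" .
  qed
  define h where "h t = (1 / \<delta>) * (t ^ j * g ((w + \<delta>) * t + b) - t ^ j * g (w * t + b))" for t
  have "h \<in> shallow_approx \<sigma>"
    unfolding h_def by (intro shallow_approx_scale shallow_approx_diff approx)
  moreover have "\<bar>t ^ Suc j * g' (w * t + b) - h t\<bar> < e" if t: "\<bar>t\<bar> \<le> R" for t
  proof -
    define x where "x = w * t + b"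
    define y where "y = (w + \<delta>) * t + b"
    obtain \<xi> where \<xi>: "\<bar>\<xi> - x\<bar> \<le> \<bar>y - x\<bar>" "g y - g x = (y - x) * g' \<xi>"
      using MVT_between[OF g] by blast
    have yx: "y - x = \<delta> * t" unfolding x_def y_def by (simp add: algebra_simps)
    have "h t = (1 / \<delta>) * (t ^ j * (g y - g x))"
      unfolding h_def x_def y_def by (simp only: right_diff_distrib)
    also have "\<dots> = t ^ Suc j * g' \<xi>" using \<xi>(2) yx \<delta>(1) by (simp add: field_simps)
    finally have ht: "h t = t ^ Suc j * g' \<xi>" .
    have x: "\<bar>x\<bar> \<le> \<bar>w\<bar> * R + \<bar>b\<bar>"
      unfolding x_def using abs_triangle_ineq[of "w * t" b] mult_left_mono[OF t, of "\<bar>w\<bar>"]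
      by (simp add: abs_mult)
    have yx_bound: "\<bar>y - x\<bar> \<le> \<delta> * R" unfolding yx using \<delta> t by (simp add: abs_mult mult_left_mono)
    have "\<delta> * R \<le> R" using \<delta>(2) R by simp
    moreover have "R1 = \<bar>w\<bar> * R + \<bar>b\<bar> + R" unfolding R1_def by (simp add: algebra_simps)
    moreover have "\<bar>\<xi>\<bar> \<le> \<bar>x\<bar> + \<bar>\<xi> - x\<bar>" by linarith
    ultimately have "\<bar>\<xi>\<bar> \<le> R1" "\<bar>x\<bar> \<le> R1" "\<bar>\<xi> - x\<bar> < d"
      using x \<xi>(1) yx_bound \<delta>(3) R by linarith+
    then have "\<bar>g' x - g' \<xi>\<bar> < e1" using g'_uc by (metis abs_minus_commute)
    have "\<bar>t ^ Suc j * g' (w * t + b) - h t\<bar> = \<bar>t\<bar> ^ Suc j * \<bar>g' x - g' \<xi>\<bar>"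
      unfolding ht x_def by (simp add: abs_mult power_abs right_diff_distrib[symmetric])
    also have "\<dots> \<le> R ^ Suc j * e1"
      using \<open>\<bar>g' x - g' \<xi>\<bar> < e1\<close> t by (intro mult_mono power_mono) auto
    finally show ?thesis using e1(2) by linarith
  qed
  ultimately show "\<exists>h\<in>shallow_approx \<sigma>. \<forall>t. \<bar>t\<bar> \<le> R \<longrightarrow> \<bar>t ^ Suc j * g' (w * t + b) - h t\<bar> < e"
    by blast
qed

lemma shallow_approx_monomial_of_derivatives:
  fixes D :: "nat \<Rightarrow> real \<Rightarrow> real"
  assumes D: "\<And>j x. j < k \<Longrightarrow> (D j has_real_derivative D (Suc j) x) (at x)"
    and D_cont: "\<And>j. j \<le> k \<Longrightarrow> continuous_on UNIV (D j)"
    and D0: "\<And>w b. (\<lambda>t. D 0 (w * t + b)) \<in> shallow_approx \<sigma>"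
    and Dk: "D k b \<noteq> 0"
  shows "(\<lambda>t. t ^ k) \<in> shallow_approx \<sigma>"
proof -
  have "j \<le> k \<Longrightarrow> (\<lambda>t. t ^ j * D j (w * t + b)) \<in> shallow_approx \<sigma>" for j w b
  proof (induction j arbitrary: w b)
    case (Suc j)
    then show ?case by (intro shallow_approx_weight_derivative[where g = "D j"] D D_cont) auto
  qed (simp add: D0)
  from shallow_approx_scale[OF this[of k 0 b], of "1 / D k b"] Dk show ?thesis
    by simp
qed

text \<open>Window integrals smooth \<open>\<sigma>\<close> without leaving \<open>shallow_approx \<sigma>\<close> and commute with forward
  differences.\<close>

definition primitive :: "(real \<Rightarrow> real) \<Rightarrow> real \<Rightarrow> real" where
  "primitive u = (SOME F. \<forall>x. (F has_real_derivative u x) (at x))"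

definition window_integral :: "real \<Rightarrow> (real \<Rightarrow> real) \<Rightarrow> real \<Rightarrow> real" where
  "window_integral h u t = primitive u (t + h) - primitive u t"

definition forward_diff :: "real \<Rightarrow> (real \<Rightarrow> real) \<Rightarrow> real \<Rightarrow> real" where
  "forward_diff h u t = u (t + h) - u t"

lemma has_real_derivative_primitive:
  assumes "continuous_on UNIV u"
  shows "(primitive u has_real_derivative u x) (at x)"
proof -
  have "\<exists>F. \<forall>x. (F has_real_derivative u x) (at x)"
    using einterval_antiderivative[of "-\<infinity>" "\<infinity>" u] assms
    by (auto simp: has_real_derivative_iff_has_vector_derivative continuous_on_eq_continuous_at)
  from someI_ex[OF this] show ?thesis unfolding primitive_def by blast
qed

lemma window_integral_eq_antiderivative:
  assumes u: "continuous_on UNIV u" and F: "\<And>x. (F has_real_derivative u x) (at x)"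
  shows "window_integral h u t = F (t + h) - F t"
proof -
  have "((\<lambda>x. primitive u x - F x) has_real_derivative 0) (at x)" for x
    using DERIV_diff[OF has_real_derivative_primitive[OF u] F] by simp
  then have "primitive u (t + h) - F (t + h) = primitive u t - F t"
    using DERIV_isconst_all by blast
  then show ?thesis unfolding window_integral_def by simp
qed

lemma window_integral_mean_value:
  assumes "continuous_on UNIV u" and "h > 0"
  shows "\<exists>\<xi>. t \<le> \<xi> \<and> \<xi> \<le> t + h \<and> window_integral h u t = h * u \<xi>"
proof -
  obtain z where "t < z" "z < t + h" "primitive u (t + h) - primitive u t = (t + h - t) * u z"
    using MVT2[of t "t + h" "primitive u" u] has_real_derivative_primitive assms by auto
  then show ?thesis unfolding window_integral_def by (intro exI[of _ z]) auto
qed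

lemma has_real_derivative_window_integral:
  assumes "continuous_on UNIV u"
  shows "(window_integral h u has_real_derivative forward_diff h u x) (at x)"
proof -
  have "((\<lambda>t. t + h) has_real_derivative 1) (at x)"
    by (auto intro!: derivative_eq_intros)
  from DERIV_chain2[OF has_real_derivative_primitive[OF assms] this]
  have "((\<lambda>t. primitive u (t + h)) has_real_derivative u (x + h)) (at x)" by simp
  from DERIV_diff[OF this has_real_derivative_primitive[OF assms]] show ?thesis
    unfolding window_integral_def[abs_def] forward_diff_def .
qed

lemma continuous_on_window_integral:
  "continuous_on UNIV u \<Longrightarrow> continuous_on UNIV (window_integral h u)"
  by (rule continuous_at_imp_continuous_on) (use DERIV_isCont[OF has_real_derivative_window_integral] in blast)

lemma continuous_on_forward_diff:
  assumes "continuous_on UNIV u"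
  shows "continuous_on UNIV (forward_diff h u)"
  unfolding forward_diff_def[abs_def]
  by (intro continuous_intros continuous_on_compose2[OF assms]) auto

lemma continuous_on_window_integral_forward_diff_iter:
  "continuous_on UNIV u \<Longrightarrow> continuous_on UNIV ((window_integral h ^^ n) ((forward_diff h ^^ m) u))"
proof (induction n)
  case 0 then show ?case by (induction m) (auto intro: continuous_on_forward_diff)
qed (auto intro: continuous_on_window_integral)

lemma window_integral_forward_diff_commute:
  assumes u: "continuous_on UNIV u"
  shows "window_integral h (forward_diff h u) = forward_diff h (window_integral h u)"
proof
  fix t
  have "((\<lambda>x. primitive u (x + h) - primitive u x) has_real_derivative forward_diff h u x) (at x)" for x
    using has_real_derivative_window_integral[OF u] unfolding window_integral_def[abs_def] .
  then have "window_integral h (forward_diff h u) t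
      = (primitive u (t + h + h) - primitive u (t + h)) - (primitive u (t + h) - primitive u t)"
    by (rule window_integral_eq_antiderivative[OF continuous_on_forward_diff[OF u]])
  then show "window_integral h (forward_diff h u) t = forward_diff h (window_integral h u) t"
    unfolding forward_diff_def[of h "window_integral h u"] window_integral_def by simp
qed

lemma forward_diff_window_integral_iter:
  assumes "continuous_on UNIV u"
  shows "forward_diff h ((window_integral h ^^ n) u) = (window_integral h ^^ n) (forward_diff h u)"
proof (induction n)
  case (Suc n)
  have "continuous_on UNIV ((window_integral h ^^ n) u)"
    using continuous_on_window_integral_forward_diff_iter[OF assms, where m = 0] by simp
  with Suc show ?case by (simp add: window_integral_forward_diff_commute[symmetric])
qed simp

definition smoothed_diff :: "real \<Rightarrow> nat \<Rightarrow> (real \<Rightarrow> real) \<Rightarrow> nat \<Rightarrow> real \<Rightarrow> real" where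
  "smoothed_diff h k u j = (window_integral h ^^ (k - j)) ((forward_diff h ^^ j) u)"

lemma has_real_derivative_smoothed_diff:
  assumes u: "continuous_on UNIV u" and "j < k"
  shows "(smoothed_diff h k u j has_real_derivative smoothed_diff h k u (Suc j) x) (at x)"
proof -
  define v where "v = (window_integral h ^^ (k - Suc j)) ((forward_diff h ^^ j) u)"
  have "continuous_on UNIV ((forward_diff h ^^ j) u)"
    using continuous_on_window_integral_forward_diff_iter[OF u, where n = 0] by simp
  moreover have "k - j = Suc (k - Suc j)" using \<open>j < k\<close> by simp
  ultimately have "smoothed_diff h k u j = window_integral h v" "smoothed_diff h k u (Suc j) = forward_diff h v"
    unfolding smoothed_diff_def v_def by (simp_all add: forward_diff_window_integral_iter)
  moreover have "continuous_on UNIV v"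
    unfolding v_def by (rule continuous_on_window_integral_forward_diff_iter[OF u])
  ultimately show ?thesis using has_real_derivative_window_integral by simp
qed

lemma continuous_on_smoothed_diff:
  "continuous_on UNIV u \<Longrightarrow> continuous_on UNIV (smoothed_diff h k u j)"
  unfolding smoothed_diff_def by (rule continuous_on_window_integral_forward_diff_iter)

lemma window_integral_Riemann_sum_error:
  assumes u: "continuous_on UNIV u" and n: "n > 0" and h: "h > 0"
    and osc: "\<And>s s'. t \<le> s \<Longrightarrow> s \<le> s' \<Longrightarrow> s' \<le> t + h \<Longrightarrow> s' - s \<le> h / n \<Longrightarrow> \<bar>u s' - u s\<bar> \<le> \<eta>"
  shows "\<bar>window_integral h u t - (\<Sum>i<n. h / n * u (t + real i * (h / n)))\<bar> \<le> h * \<eta>"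
proof -
  define \<delta> where "\<delta> = h / n"
  have \<delta>: "\<delta> > 0" "real n * \<delta> = h" unfolding \<delta>_def using n h by auto
  define F where "F i = primitive u (t + real i * \<delta>)" for i :: nat
  have "window_integral h u t = F n - F 0"
    unfolding window_integral_def F_def using \<delta>(2) by (simp add: algebra_simps)
  also have "\<dots> = (\<Sum>i<n. F (Suc i) - F i)" by (rule sum_lessThan_telescope[symmetric])
  finally have sum: "window_integral h u t = (\<Sum>i<n. F (Suc i) - F i)" .
  have "\<bar>(F (Suc i) - F i) - \<delta> * u (t + real i * \<delta>)\<bar> \<le> \<delta> * \<eta>" if i: "i < n" for i
  proof -
    let ?s = "t + real i * \<delta>"
    obtain \<xi> where \<xi>: "?s \<le> \<xi>" "\<xi> \<le> ?s + \<delta>" "window_integral \<delta> u ?s = \<delta> * u \<xi>"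
      using window_integral_mean_value[OF u \<delta>(1)] by blast
    have "real (Suc i) * \<delta> \<le> real n * \<delta>" using i \<delta>(1) by (intro mult_right_mono) auto
    then have "real i * \<delta> + \<delta> \<le> h" using \<delta>(2) by (simp add: algebra_simps)
    moreover have "real i * \<delta> \<ge> 0" using \<delta>(1) by simp
    ultimately have "t \<le> ?s" "?s \<le> \<xi>" "\<xi> \<le> t + h" "\<xi> - ?s \<le> h / n"
      using \<xi>(1,2) unfolding \<delta>_def[symmetric] by linarith+
    then have "\<bar>u \<xi> - u ?s\<bar> \<le> \<eta>" by (rule osc)
    moreover have "F (Suc i) - F i = \<delta> * u \<xi>"
      using \<xi>(3) unfolding F_def window_integral_def by (simp add: algebra_simps)
    ultimately show ?thesis using \<delta>(1) by (simp add: abs_mult right_diff_distrib[symmetric])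
  qed
  then have "\<bar>window_integral h u t - (\<Sum>i<n. \<delta> * u (t + real i * \<delta>))\<bar> \<le> (\<Sum>i<n. \<delta> * \<eta>)"
    unfolding sum sum_subtractf[symmetric] by (intro order_trans[OF sum_abs] sum_mono) auto
  also have "\<dots> = h * \<eta>" using \<delta>(2) by simp
  finally show ?thesis unfolding \<delta>_def .
qed

lemma shallow_approx_window_integral:
  assumes u_approx: "u \<in> shallow_approx \<sigma>" and u: "continuous_on UNIV u" and h: "h > 0"
  shows "window_integral h u \<in> shallow_approx \<sigma>"
proof (rule shallow_approx_closedI)
  fix R e :: real assume R: "R > 0" and e: "e > 0"
  define \<eta> where "\<eta> = e / (2 * h)"
  have \<eta>: "\<eta> > 0" "h * \<eta> < e" unfolding \<eta>_def using e h by auto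
  obtain d where d: "d > 0"
    and u_uc: "\<forall>x y. \<bar>x\<bar> \<le> R + h \<longrightarrow> \<bar>y\<bar> \<le> R + h \<longrightarrow> \<bar>y - x\<bar> < d \<longrightarrow> \<bar>u y - u x\<bar> < \<eta>"
    using uniformly_continuous_on_real_interval[OF u \<eta>(1)] by blast
  obtain n :: nat where n: "h / d < real n" using reals_Archimedean2 by blast
  moreover have "h / d > 0" using h d by simp
  ultimately have n_pos: "n > 0" by simp
  have "h / n < d" using n d n_pos by (simp add: field_simps)
  define S where "S t = (\<Sum>i<n. h / n * u (1 * t + real i * (h / n)))" for t
  have "S \<in> shallow_approx \<sigma>"
    unfolding S_def[abs_def] by (intro shallow_approx_sum shallow_approx_scale shallow_approx_affine u_approx)
  moreover have "\<bar>window_integral h u t - S t\<bar> < e" if t: "\<bar>t\<bar> \<le> R" for t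
  proof -
    have osc: "\<bar>u s' - u s\<bar> \<le> \<eta>" if "t \<le> s" "s \<le> s'" "s' \<le> t + h" "s' - s \<le> h / n" for s s'
    proof -
      have "\<bar>s\<bar> \<le> R + h" "\<bar>s'\<bar> \<le> R + h" "\<bar>s' - s\<bar> < d"
        using that t h \<open>h / n < d\<close> unfolding abs_le_iff abs_less_iff by linarith+
      then show ?thesis using u_uc by (simp add: less_imp_le)
    qed
    have "\<bar>window_integral h u t - S t\<bar> \<le> h * \<eta>"
      unfolding S_def using window_integral_Riemann_sum_error[OF u n_pos h osc] by simp
    with \<eta>(2) show ?thesis by linarith
  qed
  ultimately show "\<exists>g\<in>shallow_approx \<sigma>. \<forall>t. \<bar>t\<bar> \<le> R \<longrightarrow> \<bar>window_integral h u t - g t\<bar> < e"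
    by blast
qed

lemma shallow_approx_window_integral_iter:
  assumes "u \<in> shallow_approx \<sigma>" "continuous_on UNIV u" "h > 0"
  shows "(window_integral h ^^ n) u \<in> shallow_approx \<sigma>"
proof (induction n)
  case (Suc n)
  have "continuous_on UNIV ((window_integral h ^^ n) u)"
    using continuous_on_window_integral_forward_diff_iter[OF assms(2), where m = 0] by simp
  with Suc assms(3) show ?case by (simp add: shallow_approx_window_integral)
qed (simp add: assms(1))

lemma poly_has_antiderivative:
  fixes p :: "real poly"
  shows "\<exists>P. pderiv P = p \<and> degree P \<le> Suc (degree p)"
proof -
  define P where "P = (\<Sum>i\<le>degree p. monom (coeff p i / real (Suc i)) (Suc i))"
  have "pderiv P = (\<Sum>i\<le>degree p. monom (coeff p i) i)"
    unfolding P_def higher_pderiv_sum[of 1, simplified] pderiv_monom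
    by (intro sum.cong refl) (simp del: of_nat_Suc)
  also have "\<dots> = p" by (rule poly_as_sum_of_monoms)
  finally show ?thesis
    unfolding P_def by (auto intro!: degree_sum_le order_trans[OF degree_monom_le])
qed

lemma derivative_chain_vanishing_imp_poly:
  fixes D :: "nat \<Rightarrow> real \<Rightarrow> real"
  assumes "\<And>j x. j < k \<Longrightarrow> (D j has_real_derivative D (Suc j) x) (at x)" and "\<And>x. D k x = 0"
  shows "\<exists>p. degree p \<le> k \<and> (\<forall>x. D 0 x = poly p x)"
  using assms
proof (induction k arbitrary: D)
  case (Suc k)
  obtain p where p: "degree p \<le> k" "\<And>x. D 1 x = poly p x"
    using Suc.IH[of "\<lambda>j. D (Suc j)"] Suc.prems by auto
  obtain P where P: "pderiv P = p" "degree P \<le> Suc (degree p)"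
    using poly_has_antiderivative by blast
  have "((\<lambda>x. D 0 x - poly P x) has_real_derivative 0) (at x)" for x
    using DERIV_diff[OF Suc.prems(1)[of 0 x] poly_DERIV[of P x]] p(2) P(1) by simp
  then have c: "D 0 x - poly P x = D 0 0 - poly P 0" for x
    using DERIV_isconst_all by blast
  show ?case
  proof (intro exI[of _ "P + [:D 0 0 - poly P 0:]"] conjI allI)
    show "degree (P + [:D 0 0 - poly P 0:]) \<le> Suc k"
      using P(2) p(1) degree_add_le[of P "Suc k" "[:D 0 0 - poly P 0:]"] by simp
    show "D 0 x = poly (P + [:D 0 0 - poly P 0:]) x" for x using c[of x] by simp
  qed
qed (auto intro: exI[of _ 0])

definition lagrange_basis :: "nat \<Rightarrow> nat \<Rightarrow> real poly" where
  "lagrange_basis k i =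
     smult (1 / (\<Prod>j\<in>{0..k} - {i}. real i - real j)) (\<Prod>j\<in>{0..k} - {i}. [:- real j, 1:])"

lemma degree_lagrange_basis: "i \<le> k \<Longrightarrow> degree (lagrange_basis k i) \<le> k"
proof -
  assume "i \<le> k"
  have "degree (\<Prod>j\<in>{0..k} - {i}. [:- real j, 1:]) \<le> (\<Sum>j\<in>{0..k} - {i}. degree [:- real j, 1:])"
    using degree_prod_sum_le[of "{0..k} - {i}" "\<lambda>j. [:- real j, 1:]"] by (simp add: o_def)
  also have "\<dots> \<le> k" using \<open>i \<le> k\<close> by (simp add: card_Diff_singleton)
  finally show ?thesis unfolding lagrange_basis_def by (rule order_trans[OF degree_smult_le])
qed

lemma poly_lagrange_basis:
  "i \<le> k \<Longrightarrow> l \<le> k \<Longrightarrow> poly (lagrange_basis k i) (real l) = (if l = i then 1 else 0)"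
  by (auto simp: lagrange_basis_def poly_prod prod_zero_iff)

lemma poly_eq_lagrange_interpolation:
  fixes q :: "real poly"
  assumes "degree q \<le> k"
  shows "q = (\<Sum>i\<le>k. smult (poly q (real i)) (lagrange_basis k i))"
proof (rule ccontr)
  define r where "r = q - (\<Sum>i\<le>k. smult (poly q (real i)) (lagrange_basis k i))"
  assume "q \<noteq> (\<Sum>i\<le>k. smult (poly q (real i)) (lagrange_basis k i))"
  then have "r \<noteq> 0" unfolding r_def by simp
  have "degree r \<le> k" unfolding r_def
    by (intro degree_diff_le assms degree_sum_le) (auto intro: order_trans[OF degree_smult_le] degree_lagrange_basis)
  have "poly r (real l) = 0" if "l \<le> k" for l
  proof -
    have "(\<Sum>i\<le>k. poly q (real i) * poly (lagrange_basis k i) (real l))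
        = (\<Sum>i\<le>k. if i = l then poly q (real i) else 0)"
      using that by (intro sum.cong) (auto simp: poly_lagrange_basis)
    then show ?thesis using that unfolding r_def by (simp add: poly_sum)
  qed
  then have "real ` {0..k} \<subseteq> {x. poly r x = 0}" by auto
  then have "card (real ` {0..k}) \<le> card {x. poly r x = 0}"
    by (rule card_mono[OF poly_roots_finite[OF \<open>r \<noteq> 0\<close>]])
  also have "\<dots> \<le> degree r" by (rule card_poly_roots_bound[OF \<open>r \<noteq> 0\<close>])
  finally show False using \<open>degree r \<le> k\<close> by (simp add: card_image)
qed

lemma pointwise_limit_of_bounded_degree_polys:
  fixes p :: "nat \<Rightarrow> real poly"
  assumes "\<And>n. degree (p n) \<le> k" and "\<And>x. (\<lambda>n. poly (p n) x) \<longlonglongrightarrow> f x"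
  shows "\<exists>q. \<forall>x. f x = poly q x"
proof (intro exI allI)
  fix x
  have interpolation: "poly (p n) x = (\<Sum>i\<le>k. poly (p n) (real i) * poly (lagrange_basis k i) x)" for n
    by (subst poly_eq_lagrange_interpolation[OF assms(1)]) (simp add: poly_sum)
  have "(\<lambda>n. \<Sum>i\<le>k. poly (p n) (real i) * poly (lagrange_basis k i) x)
      \<longlonglongrightarrow> (\<Sum>i\<le>k. f (real i) * poly (lagrange_basis k i) x)"
    by (intro tendsto_sum tendsto_mult_right assms(2))
  then have "(\<lambda>n. poly (p n) x) \<longlonglongrightarrow> (\<Sum>i\<le>k. f (real i) * poly (lagrange_basis k i) x)"
    unfolding interpolation .
  then have "f x = (\<Sum>i\<le>k. f (real i) * poly (lagrange_basis k i) x)"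
    using assms(2) LIMSEQ_unique by blast
  then show "f x = poly (\<Sum>i\<le>k. smult (f (real i)) (lagrange_basis k i)) x"
    by (simp add: poly_sum)
qed

lemma window_integral_iter_approx:
  assumes u: "continuous_on UNIV u" and h: "h > 0"
    and near: "\<And>s. t \<le> s \<Longrightarrow> s \<le> t + real k * h \<Longrightarrow> \<bar>u s - u t\<bar> \<le> \<epsilon>"
  shows "m \<le> k \<Longrightarrow> t \<le> s \<Longrightarrow> s \<le> t + real (k - m) * h
    \<Longrightarrow> \<bar>(window_integral h ^^ m) u s - h ^ m * u t\<bar> \<le> \<epsilon> * h ^ m"
proof (induction m arbitrary: s)
  case (Suc m)
  define v where "v = (window_integral h ^^ m) u"
  have "continuous_on UNIV v"
    using continuous_on_window_integral_forward_diff_iter[OF u, where m = 0] unfolding v_def by simp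
  then obtain \<xi> where \<xi>: "s \<le> \<xi>" "\<xi> \<le> s + h" "window_integral h v s = h * v \<xi>"
    using window_integral_mean_value[OF _ h] by blast
  have "real (k - m) = real (k - Suc m) + 1" using Suc.prems(1) by linarith
  then have "\<xi> \<le> t + real (k - m) * h" using \<xi>(2) Suc.prems(3) by (simp add: algebra_simps)
  then have "\<bar>v \<xi> - h ^ m * u t\<bar> \<le> \<epsilon> * h ^ m"
    unfolding v_def using Suc.IH[of \<xi>] Suc.prems \<xi>(1) by simp
  then have "h * \<bar>v \<xi> - h ^ m * u t\<bar> \<le> h * (\<epsilon> * h ^ m)" using h by simp
  moreover have "(window_integral h ^^ Suc m) u s - h ^ Suc m * u t = h * (v \<xi> - h ^ m * u t)"
    using \<xi>(3) unfolding v_def by (simp add: right_diff_distrib)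
  then have "\<bar>(window_integral h ^^ Suc m) u s - h ^ Suc m * u t\<bar> = h * \<bar>v \<xi> - h ^ m * u t\<bar>"
    using h by (simp add: abs_mult)
  ultimately show ?case by (simp add: algebra_simps)
qed (use near in simp)

lemma tendsto_window_integral_iter_scaled:
  assumes u: "continuous_on UNIV u"
  shows "(\<lambda>n. (window_integral (1 / (real n + 1)) ^^ k) u x / (1 / (real n + 1)) ^ k) \<longlonglongrightarrow> u x"
proof (rule LIMSEQ_I)
  define h where "h n = 1 / (real n + 1)" for n :: nat
  have h_pos: "h n > 0" for n unfolding h_def by simp
  fix r :: real assume r: "r > 0"
  obtain d where d: "d > 0" and dd: "\<And>y. dist y x < d \<Longrightarrow> dist (u y) (u x) < r / 2"
    using u r unfolding continuous_on_eq_continuous_at[OF open_UNIV] continuous_at_eps_delta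
    by (metis UNIV_I half_gt_zero)
  obtain N :: nat where N: "real k / d < real N" using reals_Archimedean2 by blast
  have "norm ((window_integral (h n) ^^ k) u x / h n ^ k - u x) < r" if n: "N \<le> n" for n
  proof -
    have "real k < d * real N" using N d by (simp add: field_simps)
    also have "\<dots> \<le> d * (real n + 1)" using n d by (intro mult_left_mono) auto
    finally have "real k * h n < d" unfolding h_def by (simp add: field_simps)
    then have "\<bar>u s - u x\<bar> \<le> r / 2" if "x \<le> s" "s \<le> x + real k * h n" for s
      using that dd[of s] by (simp add: dist_real_def)
    then have "\<bar>(window_integral (h n) ^^ k) u x - h n ^ k * u x\<bar> \<le> r / 2 * h n ^ k"
      by (intro window_integral_iter_approx[OF u h_pos]) auto
    moreover have "(window_integral (h n) ^^ k) u x / h n ^ k - u x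
        = ((window_integral (h n) ^^ k) u x - h n ^ k * u x) / h n ^ k"
      using h_pos[of n] by (simp add: field_simps)
    ultimately have "\<bar>(window_integral (h n) ^^ k) u x / h n ^ k - u x\<bar> \<le> r / 2"
      using h_pos[of n] by (simp add: abs_div pos_divide_le_eq)
    then show ?thesis using r by simp
  qed
  then show "\<exists>N. \<forall>n\<ge>N. norm ((window_integral (1 / (real n + 1)) ^^ k) u x / (1 / (real n + 1)) ^ k - u x) < r"
    unfolding h_def by blast
qed

text \<open>If all \<open>k\<close>-th forward differences of \<open>\<sigma>\<close> vanished, every smoothing \<open>(window_integral h ^^ k) \<sigma>\<close>
  would be a polynomial of degree at most \<open>k\<close>; divided by \<open>h\<^sup>k\<close> these converge to \<open>\<sigma>\<close> as \<open>h \<rightarrow> 0\<close>.\<close>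

lemma forward_diff_iter_nonzero:
  assumes u: "continuous_on UNIV \<sigma>" and np: "\<not> is_polynomial_fun \<sigma>"
  shows "\<exists>h>0. \<exists>b. (forward_diff h ^^ k) \<sigma> b \<noteq> 0"
proof (rule ccontr)
  assume "\<not> (\<exists>h>0. \<exists>b. (forward_diff h ^^ k) \<sigma> b \<noteq> 0)"
  then have vanish: "smoothed_diff h k \<sigma> k x = 0" if "h > 0" for h x
    using that by (simp add: smoothed_diff_def)
  have "\<exists>p. degree p \<le> k \<and> (\<forall>x. smoothed_diff h k \<sigma> 0 x = poly p x)" if "h > 0" for h
    by (rule derivative_chain_vanishing_imp_poly)
      (use that in \<open>auto simp: has_real_derivative_smoothed_diff[OF u] vanish\<close>)
  then have "\<exists>p. degree p \<le> k \<and> (\<forall>x. (window_integral h ^^ k) \<sigma> x = poly p x)" if "h > 0" for h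
    using that by (simp add: smoothed_diff_def)
  then obtain p where p: "\<And>h x. h > 0 \<Longrightarrow> degree (p h) \<le> k \<and> (window_integral h ^^ k) \<sigma> x = poly (p h) x"
    by metis
  define h where "h n = 1 / (real n + 1)" for n :: nat
  have h_pos: "h n > 0" for n unfolding h_def by simp
  have "\<exists>q. \<forall>x. \<sigma> x = poly q x"
  proof (rule pointwise_limit_of_bounded_degree_polys)
    show "degree (smult (1 / h n ^ k) (p (h n))) \<le> k" for n
      using p[OF h_pos] by (meson degree_smult_le order_trans)
    show "(\<lambda>n. poly (smult (1 / h n ^ k) (p (h n))) x) \<longlonglongrightarrow> \<sigma> x" for x
      using tendsto_window_integral_iter_scaled[OF u, of k x] p[OF h_pos]
      unfolding h_def by (simp add: field_simps)
  qed
  with np show False unfolding is_polynomial_fun_def by metis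
qed

lemma shallow_approx_monomial:
  assumes u: "continuous_on UNIV \<sigma>" and np: "\<not> is_polynomial_fun \<sigma>"
  shows "(\<lambda>t. t ^ k) \<in> shallow_approx \<sigma>"
proof -
  obtain h b where h: "h > 0" and b: "(forward_diff h ^^ k) \<sigma> b \<noteq> 0"
    using forward_diff_iter_nonzero[OF u np] by blast
  show ?thesis
  proof (rule shallow_approx_monomial_of_derivatives[where D = "smoothed_diff h k \<sigma>" and b = b])
    show "(\<lambda>t. smoothed_diff h k \<sigma> 0 (w * t + c)) \<in> shallow_approx \<sigma>" for w c
      unfolding smoothed_diff_def
      by (intro shallow_approx_affine shallow_approx_window_integral_iter)
        (simp_all add: shallow_approx_activation u h)
    show "smoothed_diff h k \<sigma> k b \<noteq> 0" using b by (simp add: smoothed_diff_def)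
  qed (auto simp: has_real_derivative_smoothed_diff[OF u] continuous_on_smoothed_diff[OF u])
qed

lemma shallow_approx_exp:
  assumes "continuous_on UNIV \<sigma>" and "\<not> is_polynomial_fun \<sigma>"
  shows "exp \<in> shallow_approx \<sigma>"
proof (rule shallow_approx_closedI)
  fix R e :: real assume R: "R > 0" and e: "e > 0"
  have "(\<lambda>n. inverse (fact n) * R ^ n) \<longlonglongrightarrow> 0" by (rule summable_LIMSEQ_zero[OF summable_exp])
  moreover have "e / exp R > 0" using e by simp
  ultimately obtain N where "\<forall>n\<ge>N. norm (inverse (fact n) * R ^ n - 0) < e / exp R"
    by (blast dest: LIMSEQ_D)
  then have N: "R ^ N / fact N < e / exp R"
    using R by (simp add: divide_inverse mult.commute)
  define T where "T t = (\<Sum>m<N. (1 / fact m) * t ^ m)" for t :: real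
  have "T \<in> shallow_approx \<sigma>"
    unfolding T_def[abs_def] by (intro shallow_approx_sum shallow_approx_scale shallow_approx_monomial assms)
  moreover have "\<bar>exp t - T t\<bar> < e" if t: "\<bar>t\<bar> \<le> R" for t
  proof -
    obtain z where z: "\<bar>z\<bar> \<le> \<bar>t\<bar>" "exp t = (\<Sum>m<N. t ^ m / fact m) + exp z / fact N * t ^ N"
      using Maclaurin_exp_le[of t N] by blast
    then have "\<bar>exp t - T t\<bar> = exp z * (\<bar>t\<bar> ^ N / fact N)"
      unfolding T_def by (simp add: abs_mult power_abs)
    also have "\<dots> \<le> exp R * (R ^ N / fact N)"
      using z(1) t by (intro mult_mono divide_right_mono power_mono) auto
    also have "\<dots> < exp R * (e / exp R)" using N by (intro mult_strict_left_mono) auto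
    finally show ?thesis by simp
  qed
  ultimately show "\<exists>h\<in>shallow_approx \<sigma>. \<forall>t. \<bar>t\<bar> \<le> R \<longrightarrow> \<bar>exp t - h t\<bar> < e" by blast
qed

definition exp_sum :: "(real \<times> ('b \<Rightarrow> real)) list \<Rightarrow> 'b \<Rightarrow> real" where
  "exp_sum L x = (\<Sum>(c, l)\<leftarrow>L. c * exp (l x))"

lemma exp_sum_Nil [simp]: "exp_sum [] x = 0"
  by (simp add: exp_sum_def)

lemma exp_sum_Cons [simp]: "exp_sum ((c, l) # L) x = c * exp (l x) + exp_sum L x"
  by (simp add: exp_sum_def)

lemma exp_sum_append: "exp_sum (L @ M) x = exp_sum L x + exp_sum M x"
  by (simp add: exp_sum_def)

definition exp_sum_product :: "(real \<times> ('b \<Rightarrow> real)) list \<Rightarrow> (real \<times> ('b \<Rightarrow> real)) list \<Rightarrow> (real \<times> ('b \<Rightarrow> real)) list" where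
  "exp_sum_product L M = concat (map (\<lambda>(c, l). map (\<lambda>(d, m). (c * d, \<lambda>x. l x + m x)) M) L)"

lemma exp_sum_times: "exp_sum L x * exp_sum M x = exp_sum (exp_sum_product L M) x"
proof (induction L)
  case (Cons a L)
  obtain c l where a: "a = (c, l)" by (cases a)
  have "c * exp (l x) * exp_sum M x = exp_sum (map (\<lambda>(d, m). (c * d, \<lambda>x. l x + m x)) M) x"
    by (induction M) (auto simp: algebra_simps exp_add)
  with Cons show ?case
    unfolding a by (simp add: exp_sum_product_def exp_sum_append algebra_simps)
qed (simp add: exp_sum_product_def)

lemma continuous_on_exp_sum:
  "(\<And>l. l \<in> snd ` set L \<Longrightarrow> continuous_on S l) \<Longrightarrow> continuous_on S (exp_sum L)"
proof (induction L)
  case (Cons a L)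
  obtain c l where "a = (c, l)" by (cases a)
  with Cons show ?case by (auto intro!: continuous_intros)
qed (simp add: exp_sum_def)

lemma Stone_Weierstrass_exp_sum:
  fixes S :: "'b::t2_space set" and \<Lambda> :: "('b \<Rightarrow> real) set"
  assumes S: "compact S" and zero: "(\<lambda>x. 0) \<in> \<Lambda>"
    and add: "\<And>l m. l \<in> \<Lambda> \<Longrightarrow> m \<in> \<Lambda> \<Longrightarrow> (\<lambda>x. l x + m x) \<in> \<Lambda>"
    and cont: "\<And>l. l \<in> \<Lambda> \<Longrightarrow> continuous_on S l"
    and sep: "\<And>x y. x \<in> S \<Longrightarrow> y \<in> S \<Longrightarrow> x \<noteq> y \<Longrightarrow> \<exists>l\<in>\<Lambda>. l x \<noteq> l y"
    and f: "continuous_on S f" and e: "e > 0"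
  shows "\<exists>L. snd ` set L \<subseteq> \<Lambda> \<and> (\<forall>x\<in>S. \<bar>f x - exp_sum L x\<bar> < e)"
proof -
  define P where "P g \<longleftrightarrow> (\<exists>L. snd ` set L \<subseteq> \<Lambda> \<and> g = exp_sum L)" for g
  have "\<exists>g. P g \<and> (\<forall>x\<in>S. \<bar>f x - g x\<bar> < e)"
  proof (rule Stone_Weierstrass_HOL[OF S _ _ _ _ _ f e])
    show "P (\<lambda>x. c)" for c unfolding P_def using zero by (intro exI[of _ "[(c, \<lambda>x. 0)]"]) auto
    show "continuous_on S g" if "P g" for g
      using that cont unfolding P_def by (auto intro!: continuous_on_exp_sum)
    show "P (\<lambda>x. g x + h x)" if gh: "P g \<and> P h" for g h
    proof -
      obtain L M where "snd ` set L \<subseteq> \<Lambda>" "g = exp_sum L" "snd ` set M \<subseteq> \<Lambda>" "h = exp_sum M"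
        using gh unfolding P_def by blast
      then show ?thesis unfolding P_def by (intro exI[of _ "L @ M"]) (auto simp: exp_sum_append)
    qed
    show "P (\<lambda>x. g x * h x)" if gh: "P g \<and> P h" for g h
    proof -
      obtain L M where "snd ` set L \<subseteq> \<Lambda>" "g = exp_sum L" "snd ` set M \<subseteq> \<Lambda>" "h = exp_sum M"
        using gh unfolding P_def by blast
      moreover have "snd ` set (exp_sum_product L M) \<subseteq> \<Lambda>" if "snd ` set L \<subseteq> \<Lambda>" "snd ` set M \<subseteq> \<Lambda>"
        using that add unfolding exp_sum_product_def by (force split: prod.splits)
      ultimately show ?thesis unfolding P_def by (auto simp: exp_sum_times)
    qed
    show "\<exists>g. P g \<and> g x \<noteq> g y" if xy: "x \<in> S \<and> y \<in> S \<and> x \<noteq> y" for x y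
    proof -
      obtain l where "l \<in> \<Lambda>" "l x \<noteq> l y" using sep xy by blast
      then show ?thesis unfolding P_def by (intro exI[of _ "exp_sum [(1, l)]"] conjI exI[of _ "[(1, l)]"]) auto
    qed
  qed
  then show ?thesis unfolding P_def by blast
qed

definition ridge_net :: "(real \<Rightarrow> real) \<Rightarrow> (real \<times> 'a::real_inner \<times> real) list \<Rightarrow> 'a \<Rightarrow> real" where
  "ridge_net \<sigma> U x = (\<Sum>(a, w, b)\<leftarrow>U. a * \<sigma> (w \<bullet> x + b))"

lemma ridge_net_append: "ridge_net \<sigma> (U @ U') x = ridge_net \<sigma> U x + ridge_net \<sigma> U' x"
  by (simp add: ridge_net_def)

lemma ridge_net_shallow_net:
  "ridge_net \<sigma> (map (\<lambda>(v, a, b). (v, a *\<^sub>R w, b)) V) x = shallow_net \<sigma> V (w \<bullet> x)"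
  by (induction V) (auto simp: ridge_net_def shallow_net_def)

lemma continuous_on_ridge_net:
  assumes "continuous_on UNIV \<sigma>"
  shows "continuous_on X (ridge_net \<sigma> U)"
proof (induction U)
  case (Cons a U)
  obtain c w b where "a = (c, w, b)" by (cases a) auto
  with Cons show ?case
    by (auto simp: ridge_net_def intro!: continuous_intros continuous_on_compose2[OF assms])
qed (simp add: ridge_net_def)

lemma ridge_net_approx_exp_sum:
  fixes X :: "'a::real_inner set"
  assumes "bounded X" and "continuous_on UNIV \<sigma>" and "\<not> is_polynomial_fun \<sigma>"
    and "snd ` set L \<subseteq> {\<lambda>x. w \<bullet> x | w. True}" and "\<eta> > 0"
  shows "\<exists>U. \<forall>x\<in>X. \<bar>exp_sum L x - ridge_net \<sigma> U x\<bar> < \<eta>"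
  using assms(4,5)
proof (induction L arbitrary: \<eta>)
  case Nil
  then show ?case by (intro exI[of _ "[]"]) (simp add: ridge_net_def)
next
  case (Cons a L)
  obtain c w where a: "a = (c, \<lambda>x. w \<bullet> x)" using Cons.prems(1) by (cases a) auto
  have "\<eta> / 2 > 0" "snd ` set L \<subseteq> {\<lambda>x. w \<bullet> x | w. True}" using Cons.prems by auto
  then obtain U where U: "\<forall>x\<in>X. \<bar>exp_sum L x - ridge_net \<sigma> U x\<bar> < \<eta> / 2"
    using Cons.IH by blast
  obtain B where B: "\<And>x. x \<in> X \<Longrightarrow> norm x \<le> B" "B \<ge> 0"
    using assms(1) unfolding bounded_pos by (auto intro: less_imp_le)
  have "norm w * B + 1 > 0" "\<eta> / 2 > 0" using B(2) Cons.prems(2) by (simp_all add: add_nonneg_pos)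
  from shallow_approxD[OF shallow_approx_scale[OF shallow_approx_exp[OF assms(2,3)]] this]
  obtain V where V: "\<forall>t. \<bar>t\<bar> \<le> norm w * B + 1 \<longrightarrow> \<bar>c * exp t - shallow_net \<sigma> V t\<bar> < \<eta> / 2"
    by blast
  have "\<bar>c * exp (w \<bullet> x) - ridge_net \<sigma> (map (\<lambda>(v, a, b). (v, a *\<^sub>R w, b)) V) x\<bar> < \<eta> / 2"
    if "x \<in> X" for x
  proof -
    have "\<bar>w \<bullet> x\<bar> \<le> norm w * B"
      using Cauchy_Schwarz_ineq2[of w x] mult_left_mono[OF B(1)[OF that] norm_ge_zero[of w]] by linarith
    then show ?thesis unfolding ridge_net_shallow_net using V by simp
  qed
  then have "\<bar>exp_sum (a # L) x - ridge_net \<sigma> (map (\<lambda>(v, a, b). (v, a *\<^sub>R w, b)) V @ U) x\<bar> < \<eta>"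
    if "x \<in> X" for x
    using that U abs_diff_triangle_ineq[of "c * exp (w \<bullet> x)" "exp_sum L x"
        "ridge_net \<sigma> (map (\<lambda>(v, a, b). (v, a *\<^sub>R w, b)) V) x" "ridge_net \<sigma> U x"]
    unfolding a ridge_net_append exp_sum_Cons by fastforce
  then show ?case by blast
qed

theorem ridge_net_universal_approx:
  fixes X :: "'a::euclidean_space set"
  assumes X: "compact X" and \<sigma>: "continuous_on UNIV \<sigma>" "\<not> is_polynomial_fun \<sigma>"
    and g: "continuous_on X g" and e: "e > 0"
  shows "\<exists>U. \<forall>x\<in>X. \<bar>g x - ridge_net \<sigma> U x\<bar> < e"
proof -
  define \<Lambda> where "\<Lambda> = {\<lambda>x. w \<bullet> x | w :: 'a. True}"
  have "\<exists>L. snd ` set L \<subseteq> \<Lambda> \<and> (\<forall>x\<in>X. \<bar>g x - exp_sum L x\<bar> < e / 2)"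
  proof (rule Stone_Weierstrass_exp_sum[OF X _ _ _ _ g])
    show "(\<lambda>x. 0) \<in> \<Lambda>" unfolding \<Lambda>_def by (auto intro!: exI[of _ 0])
    show "(\<lambda>x. l x + m x) \<in> \<Lambda>" if "l \<in> \<Lambda>" "m \<in> \<Lambda>" for l m
      using that unfolding \<Lambda>_def by (auto simp: inner_add_left[symmetric])
    show "continuous_on X l" if "l \<in> \<Lambda>" for l
      using that unfolding \<Lambda>_def by (auto intro: continuous_intros)
    show "\<exists>l\<in>\<Lambda>. l x \<noteq> l y" if "x \<noteq> y" for x y :: 'a
    proof -
      have "(x - y) \<bullet> x \<noteq> (x - y) \<bullet> y"
        using that by (metis eq_iff_diff_eq_0 inner_diff_right inner_eq_zero_iff)
      then show ?thesis unfolding \<Lambda>_def by blast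
    qed
  qed (use e in simp)
  then obtain L where L: "snd ` set L \<subseteq> \<Lambda>" "\<forall>x\<in>X. \<bar>g x - exp_sum L x\<bar> < e / 2"
    by blast
  obtain U where "\<forall>x\<in>X. \<bar>exp_sum L x - ridge_net \<sigma> U x\<bar> < e / 2"
    using ridge_net_approx_exp_sum[OF compact_imp_bounded[OF X] \<sigma> L(1)[unfolded \<Lambda>_def] half_gt_zero[OF e]]
    by blast
  with L(2) have "\<bar>g x - ridge_net \<sigma> U x\<bar> < e" if "x \<in> X" for x
    using that abs_triangle_ineq[of "g x - exp_sum L x" "exp_sum L x - ridge_net \<sigma> U x"] by fastforce
  then show ?thesis by blast
qed

lemma borel_prob_measuresD:
  assumes "p \<in> borel_prob_measures X"
  shows "prob_space p" "sets p = sets (restrict_space borel X)" "space p = X"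
proof -
  show "prob_space p" "sets p = sets (restrict_space borel X)"
    using assms unfolding borel_prob_measures_def by auto
  then have "space p = space (restrict_space borel X)" by (intro sets_eq_imp_space_eq) simp
  then show "space p = X" by (simp add: space_restrict_space)
qed

lemma integrable_continuous_on_borel_prob:
  fixes g :: "'a::euclidean_space \<Rightarrow> real"
  assumes X: "compact X" and p: "p \<in> borel_prob_measures X" and g: "continuous_on X g"
  shows "integrable p g"
proof -
  interpret prob_space p by (rule borel_prob_measuresD(1)[OF p])
  obtain B where "\<And>x. x \<in> X \<Longrightarrow> norm (g x) \<le> B"
    using compact_imp_bounded[OF compact_continuous_image[OF g X]] unfolding bounded_iff by blast
  moreover have "g \<in> borel_measurable p"
    using borel_measurable_continuous_on_restrict[OF g]
      measurable_cong_sets[OF borel_prob_measuresD(2)[OF p] refl] by blast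
  ultimately show ?thesis
    by (intro integrable_const_bound[where B = B]) (auto simp: borel_prob_measuresD(3)[OF p])
qed

lemma abs_integral_le_bound_borel_prob:
  fixes f :: "'a::euclidean_space \<Rightarrow> real"
  assumes p: "p \<in> borel_prob_measures X" and f: "integrable p f"
    and B: "\<And>x. x \<in> X \<Longrightarrow> \<bar>f x\<bar> \<le> B"
  shows "\<bar>\<integral>x. f x \<partial>p\<bar> \<le> B"
proof -
  interpret prob_space p by (rule borel_prob_measuresD(1)[OF p])
  have "\<bar>\<integral>x. f x \<partial>p\<bar> \<le> (\<integral>x. B \<partial>p)"
    by (rule integral_abs_bound_integral[OF f]) (use B borel_prob_measuresD(3)[OF p] in auto)
  then show ?thesis by (simp add: prob_space)
qed

definition mean_ridge_net :: "(real \<Rightarrow> real) \<Rightarrow> (real \<times> 'a::euclidean_space \<times> real) list \<Rightarrow> 'a measure \<Rightarrow> real" where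
  "mean_ridge_net \<sigma> U p = (\<Sum>(a, w, b)\<leftarrow>U. a * (\<integral>x. \<sigma> (w \<bullet> x + b) \<partial>p))"

lemma integral_ridge_net:
  fixes X :: "'a::euclidean_space set"
  assumes X: "compact X" and \<sigma>: "continuous_on UNIV \<sigma>" and p: "p \<in> borel_prob_measures X"
  shows "(\<integral>x. ridge_net \<sigma> U x \<partial>p) = mean_ridge_net \<sigma> U p"
proof (induction U)
  case (Cons a U)
  obtain c w b where a: "a = (c, w, b)" by (cases a) auto
  have "integrable p (\<lambda>x. \<sigma> (w \<bullet> x + b))"
    by (intro integrable_continuous_on_borel_prob[OF X p] continuous_on_compose2[OF \<sigma>] continuous_intros) auto
  moreover have "integrable p (ridge_net \<sigma> U)"
    by (rule integrable_continuous_on_borel_prob[OF X p continuous_on_ridge_net[OF \<sigma>]])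
  moreover have "ridge_net \<sigma> (a # U) x = c * \<sigma> (w \<bullet> x + b) + ridge_net \<sigma> U x" for x
    unfolding a by (simp add: ridge_net_def)
  ultimately show ?case using Cons unfolding a by (simp add: mean_ridge_net_def)
qed (simp add: ridge_net_def mean_ridge_net_def)

lemma mean_ridge_net_approx_integral:
  fixes X :: "'a::euclidean_space set"
  assumes X: "compact X" and \<sigma>: "continuous_on UNIV \<sigma>" "\<not> is_polynomial_fun \<sigma>"
    and g: "continuous_on X g" and \<delta>: "\<delta> > 0"
  shows "\<exists>U. \<forall>p\<in>borel_prob_measures X. \<bar>(\<integral>x. g x \<partial>p) - mean_ridge_net \<sigma> U p\<bar> \<le> \<delta>"
proof -
  obtain U where U: "\<forall>x\<in>X. \<bar>g x - ridge_net \<sigma> U x\<bar> < \<delta>"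
    using ridge_net_universal_approx[OF X \<sigma> g \<delta>] by blast
  have "\<bar>(\<integral>x. g x \<partial>p) - mean_ridge_net \<sigma> U p\<bar> \<le> \<delta>" if p: "p \<in> borel_prob_measures X" for p
  proof -
    have "integrable p g" "integrable p (ridge_net \<sigma> U)"
      by (intro integrable_continuous_on_borel_prob[OF X p] g continuous_on_ridge_net[OF \<sigma>(1)])+
    moreover from this have "\<bar>\<integral>x. g x - ridge_net \<sigma> U x \<partial>p\<bar> \<le> \<delta>"
      by (intro abs_integral_le_bound_borel_prob[OF p]) (use U in \<open>auto intro: less_imp_le\<close>)
    ultimately show ?thesis by (simp add: integral_ridge_net[OF X \<sigma>(1) p])
  qed
  then show ?thesis by blast
qed

definition measure_net ::
    "(real \<Rightarrow> real) \<Rightarrow> nat \<Rightarrow> nat \<Rightarrow> (nat \<Rightarrow> 'a::euclidean_space) \<Rightarrow> (nat \<Rightarrow> real)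
      \<Rightarrow> (nat \<Rightarrow> nat \<Rightarrow> real) \<Rightarrow> (nat \<Rightarrow> real) \<Rightarrow> (nat \<Rightarrow> real) \<Rightarrow> real \<Rightarrow> 'a measure \<Rightarrow> real" where
  "measure_net \<sigma> k m W3 b3 W2 b2 w1 b1 p =
     (\<Sum>j<m. w1 j * \<sigma> ((\<Sum>i<k. W2 j i * (\<integral>x. \<sigma> (W3 i \<bullet> x + b3 i) \<partial>p)) + b2 j)) + b1"

definition is_measure_net :: "(real \<Rightarrow> real) \<Rightarrow> ('a::euclidean_space measure \<Rightarrow> real) \<Rightarrow> bool" where
  "is_measure_net \<sigma> F \<longleftrightarrow> (\<exists>k m W3 b3 W2 b2 w1 b1. F = measure_net \<sigma> k m W3 b3 W2 b2 w1 b1)"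

lemma is_measure_net_zero: "is_measure_net \<sigma> (\<lambda>p. 0)"
  unfolding is_measure_net_def measure_net_def by (intro exI[of _ 0]) auto

lemma sum_lessThan_add: "(\<Sum>i<m + n. f i) = (\<Sum>i<m. f i) + (\<Sum>i<n. f (m + i))" for n :: nat
  by (induction n) (simp_all add: add.assoc)

text \<open>Two networks run in parallel: hidden units and output units are stacked, and the
  second-layer weight matrix is block diagonal.\<close>

lemma is_measure_net_add:
  assumes "is_measure_net \<sigma> F" "is_measure_net \<sigma> G"
  shows "is_measure_net \<sigma> (\<lambda>p. F p + G p)"
proof -
  obtain k1 m1 W3 b3 W2 b2 w1 b1 where F: "F = measure_net \<sigma> k1 m1 W3 b3 W2 b2 w1 b1"
    using assms(1) unfolding is_measure_net_def by blast
  obtain k2 m2 W3' b3' W2' b2' w1' b1' where G: "G = measure_net \<sigma> k2 m2 W3' b3' W2' b2' w1' b1'"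
    using assms(2) unfolding is_measure_net_def by blast
  define W3'' where "W3'' i = (if i < k1 then W3 i else W3' (i - k1))" for i
  define b3'' where "b3'' i = (if i < k1 then b3 i else b3' (i - k1))" for i
  define W2'' where "W2'' j i =
    (if j < m1 then (if i < k1 then W2 j i else 0) else (if i < k1 then 0 else W2' (j - m1) (i - k1)))" for j i
  define b2'' where "b2'' j = (if j < m1 then b2 j else b2' (j - m1))" for j
  define w1'' where "w1'' j = (if j < m1 then w1 j else w1' (j - m1))" for j
  define I where "I p i = (\<integral>x. \<sigma> (W3'' i \<bullet> x + b3'' i) \<partial>p)" for p i
  have hidden1: "(\<Sum>i<k1 + k2. W2'' j i * I p i) = (\<Sum>i<k1. W2 j i * (\<integral>x. \<sigma> (W3 i \<bullet> x + b3 i) \<partial>p))"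
    if "j < m1" for j p
    unfolding sum_lessThan_add using that by (simp add: W2''_def I_def W3''_def b3''_def)
  have hidden2: "(\<Sum>i<k1 + k2. W2'' (m1 + j) i * I p i)
      = (\<Sum>i<k2. W2' j i * (\<integral>x. \<sigma> (W3' i \<bullet> x + b3' i) \<partial>p))" for j p
    unfolding sum_lessThan_add by (simp add: W2''_def I_def W3''_def b3''_def)
  have "F p + G p = measure_net \<sigma> (k1 + k2) (m1 + m2) W3'' b3'' W2'' b2'' w1'' (b1 + b1') p" for p
  proof -
    have "(\<Sum>j<m1. w1'' j * \<sigma> ((\<Sum>i<k1 + k2. W2'' j i * I p i) + b2'' j))
        = (\<Sum>j<m1. w1 j * \<sigma> ((\<Sum>i<k1. W2 j i * (\<integral>x. \<sigma> (W3 i \<bullet> x + b3 i) \<partial>p)) + b2 j))"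
      by (rule sum.cong) (simp_all add: hidden1 w1''_def b2''_def)
    moreover have "(\<Sum>j<m2. w1'' (m1 + j) * \<sigma> ((\<Sum>i<k1 + k2. W2'' (m1 + j) i * I p i) + b2'' (m1 + j)))
        = (\<Sum>j<m2. w1' j * \<sigma> ((\<Sum>i<k2. W2' j i * (\<integral>x. \<sigma> (W3' i \<bullet> x + b3' i) \<partial>p)) + b2' j))"
      by (rule sum.cong) (simp_all add: hidden2 w1''_def b2''_def)
    ultimately show ?thesis
      unfolding F G measure_net_def I_def[symmetric] sum_lessThan_add[of _ m1 m2] by simp
  qed
  then show ?thesis unfolding is_measure_net_def by blast
qed

lemma is_measure_net_shallow_net_mean_ridge_net:
  "is_measure_net \<sigma> (\<lambda>p. shallow_net \<sigma> V (mean_ridge_net \<sigma> U p))"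
proof -
  define W3 where "W3 i = fst (snd (U ! i))" for i
  define b3 where "b3 i = snd (snd (U ! i))" for i
  define W2 where "W2 j i = fst (snd (V ! j)) * fst (U ! i)" for j i
  define b2 where "b2 j = snd (snd (V ! j))" for j
  define w1 where "w1 j = fst (V ! j)" for j
  have "shallow_net \<sigma> V (mean_ridge_net \<sigma> U p) = measure_net \<sigma> (length U) (length V) W3 b3 W2 b2 w1 0 p" for p
  proof -
    define s where "s = (\<Sum>i<length U. fst (U ! i) * (\<integral>x. \<sigma> (W3 i \<bullet> x + b3 i) \<partial>p))"
    have "mean_ridge_net \<sigma> U p = s"
      unfolding mean_ridge_net_def sum_list_sum_nth s_def W3_def b3_def
      by (simp add: split_beta atLeast0LessThan)
    moreover have "shallow_net \<sigma> V s = (\<Sum>j<length V. w1 j * \<sigma> (fst (snd (V ! j)) * s + b2 j))"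
      unfolding shallow_net_def sum_list_sum_nth w1_def b2_def by (simp add: split_beta atLeast0LessThan)
    ultimately show ?thesis
      unfolding measure_net_def s_def W2_def by (simp add: sum_distrib_left mult.assoc)
  qed
  then show ?thesis unfolding is_measure_net_def by blast
qed

text \<open>Approximate \<open>\<integral>g dp\<close> by the hidden layer, then \<open>c exp\<close> on the resulting bounded range
  by the output layer; uniform continuity of \<open>c exp\<close> absorbs the error of the first step.\<close>

lemma measure_net_approx_exp_integral:
  fixes X :: "'a::euclidean_space set"
  assumes X: "compact X" and \<sigma>: "continuous_on UNIV \<sigma>" "\<not> is_polynomial_fun \<sigma>"
    and g: "continuous_on X g" and \<eta>: "\<eta> > 0"
  shows "\<exists>G. is_measure_net \<sigma> G \<and> (\<forall>p\<in>borel_prob_measures X. \<bar>c * exp (\<integral>x. g x \<partial>p) - G p\<bar> < \<eta>)"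
proof -
  obtain M where M: "M > 0" "\<And>x. x \<in> X \<Longrightarrow> \<bar>g x\<bar> \<le> M"
    using compact_imp_bounded[OF compact_continuous_image[OF g X]] unfolding bounded_pos by auto
  have "M + 1 > 0" "\<eta> / 2 > 0" using M \<eta> by auto
  from shallow_approxD[OF shallow_approx_scale[OF shallow_approx_exp[OF \<sigma>]] this]
  obtain V where V: "\<forall>t. \<bar>t\<bar> \<le> M + 1 \<longrightarrow> \<bar>c * exp t - shallow_net \<sigma> V t\<bar> < \<eta> / 2"
    by blast
  have "continuous_on UNIV (\<lambda>t. c * exp t)" by (intro continuous_intros)
  from uniformly_continuous_on_real_interval[OF this \<open>\<eta> / 2 > 0\<close>, of "M + 1"]
  obtain d where d: "d > 0"
    and exp_uc: "\<forall>s t. \<bar>s\<bar> \<le> M + 1 \<longrightarrow> \<bar>t\<bar> \<le> M + 1 \<longrightarrow> \<bar>t - s\<bar> < d \<longrightarrow> \<bar>c * exp t - c * exp s\<bar> < \<eta> / 2"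
    by blast
  obtain U where U: "\<forall>p\<in>borel_prob_measures X. \<bar>(\<integral>x. g x \<partial>p) - mean_ridge_net \<sigma> U p\<bar> \<le> min 1 (d / 2)"
    using mean_ridge_net_approx_integral[OF X \<sigma> g, of "min 1 (d / 2)"] d by auto
  have "\<bar>c * exp (\<integral>x. g x \<partial>p) - shallow_net \<sigma> V (mean_ridge_net \<sigma> U p)\<bar> < \<eta>"
    if p: "p \<in> borel_prob_measures X" for p
  proof -
    define s where "s = (\<integral>x. g x \<partial>p)"
    define t where "t = mean_ridge_net \<sigma> U p"
    have "\<bar>s\<bar> \<le> M"
      unfolding s_def using abs_integral_le_bound_borel_prob[OF p integrable_continuous_on_borel_prob[OF X p g] M(2)] .
    moreover have "\<bar>s - t\<bar> \<le> min 1 (d / 2)" using U p unfolding s_def t_def by blast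
    ultimately have "\<bar>s\<bar> \<le> M + 1" "\<bar>t\<bar> \<le> M + 1" "\<bar>t - s\<bar> < d" using d by linarith+
    then have "\<bar>c * exp t - c * exp s\<bar> < \<eta> / 2" "\<bar>c * exp t - shallow_net \<sigma> V t\<bar> < \<eta> / 2"
      using exp_uc V by blast+
    then show ?thesis unfolding s_def[symmetric] t_def[symmetric] by linarith
  qed
  then show ?thesis using is_measure_net_shallow_net_mean_ridge_net by blast
qed

lemma measure_net_approx_exp_integral_sum:
  fixes X :: "'a::euclidean_space set"
  assumes X: "compact X" and \<sigma>: "continuous_on UNIV \<sigma>" "\<not> is_polynomial_fun \<sigma>"
    and L: "\<forall>(c, g)\<in>set L. continuous_on X g" and \<eta>: "\<eta> > 0"
  shows "\<exists>G. is_measure_net \<sigma> G \<and>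
    (\<forall>p\<in>borel_prob_measures X. \<bar>(\<Sum>(c, g)\<leftarrow>L. c * exp (\<integral>x. g x \<partial>p)) - G p\<bar> < \<eta>)"
  using L \<eta>
proof (induction L arbitrary: \<eta>)
  case Nil
  then show ?case using is_measure_net_zero by fastforce
next
  case (Cons a L)
  obtain c g where a: "a = (c, g)" by (cases a)
  obtain G1 where G1: "is_measure_net \<sigma> G1"
    "\<forall>p\<in>borel_prob_measures X. \<bar>c * exp (\<integral>x. g x \<partial>p) - G1 p\<bar> < \<eta> / 2"
    using measure_net_approx_exp_integral[OF X \<sigma>, of g "\<eta> / 2" c] Cons.prems a by auto
  obtain G2 where G2: "is_measure_net \<sigma> G2"
    "\<forall>p\<in>borel_prob_measures X. \<bar>(\<Sum>(c, g)\<leftarrow>L. c * exp (\<integral>x. g x \<partial>p)) - G2 p\<bar> < \<eta> / 2"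
    using Cons by (metis half_gt_zero list.set_intros(2))
  have "\<bar>(\<Sum>(c, g)\<leftarrow>a # L. c * exp (\<integral>x. g x \<partial>p)) - (G1 p + G2 p)\<bar> < \<eta>"
    if "p \<in> borel_prob_measures X" for p
  proof -
    have "\<bar>c * exp (\<integral>x. g x \<partial>p) - G1 p\<bar> < \<eta> / 2"
      "\<bar>(\<Sum>(c, g)\<leftarrow>L. c * exp (\<integral>x. g x \<partial>p)) - G2 p\<bar> < \<eta> / 2"
      using G1(2) G2(2) that by blast+
    then show ?thesis
      using abs_diff_triangle_ineq[of "c * exp (\<integral>x. g x \<partial>p)" "\<Sum>(c, g)\<leftarrow>L. c * exp (\<integral>x. g x \<partial>p)"
          "G1 p" "G2 p"]
      unfolding a by simp
  qed
  with is_measure_net_add[OF G1(1) G2(1)] show ?case by blast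
qed

text \<open>A copy of \<open>'i \<Rightarrow> real\<close> with the product topology, needed as a Hausdorff type for
  Stone--Weierstrass: the topology instance on function types cannot be declared \<open>t2_space\<close> because
  it would clash with the metric instance for countable index types.\<close>

typedef 'i pointwise = "UNIV :: ('i \<Rightarrow> real) set"
  by simp

lemma range_Rep_pointwise: "range Rep_pointwise = UNIV"
  by (metis Abs_pointwise_inverse UNIV_I surjI)

instantiation pointwise :: (type) topological_space
begin

definition open_pointwise :: "'a pointwise set \<Rightarrow> bool" where
  "open_pointwise U \<longleftrightarrow> open (Rep_pointwise ` U)"

instance
proof
  show "open (UNIV :: 'a pointwise set)"
    unfolding open_pointwise_def by (simp add: range_Rep_pointwise)
  show "open (S \<inter> T)" if "open S" "open T" for S T :: "'a pointwise set"
    using that open_Int unfolding open_pointwise_def by (simp add: image_Int Rep_pointwise_inject inj_on_def)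
  show "open (\<Union>K)" if "\<forall>S\<in>K. open S" for K :: "'a pointwise set set"
    using that unfolding open_pointwise_def image_Union by auto
qed

end

lemma open_pointwise_vimage: "open (Rep_pointwise -` U) \<longleftrightarrow> open U"
  unfolding open_pointwise_def by (simp add: image_vimage_eq range_Rep_pointwise)

instance pointwise :: (type) t2_space
proof
  fix x y :: "'a pointwise" assume "x \<noteq> y"
  then have "Rep_pointwise x \<noteq> Rep_pointwise y" by (simp add: Rep_pointwise_inject)
  moreover have "Hausdorff_space (euclidean :: ('a \<Rightarrow> real) topology)"
    by (metis euclidean_product_topology Hausdorff_space_euclidean Hausdorff_space_product_topology)
  ultimately obtain U V where "open U" "open V" "Rep_pointwise x \<in> U" "Rep_pointwise y \<in> V" "U \<inter> V = {}"
    unfolding Hausdorff_space_def disjnt_def by (metis UNIV_I open_openin topspace_euclidean)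
  then show "\<exists>U V. open U \<and> open V \<and> x \<in> U \<and> y \<in> V \<and> U \<inter> V = {}"
    by (intro exI[of _ "Rep_pointwise -` U"] exI[of _ "Rep_pointwise -` V"]) (auto simp: open_pointwise_vimage)
qed

lemma continuous_map_Abs_pointwise:
  fixes h :: "'a \<Rightarrow> 'i \<Rightarrow> real"
  assumes "continuous_map T euclidean h"
  shows "continuous_map T euclidean (\<lambda>x. Abs_pointwise (h x))"
  unfolding continuous_map_def
proof (intro conjI allI impI)
  fix V :: "'i pointwise set" assume "openin euclidean V"
  then have "open (Rep_pointwise ` V)" by (simp add: open_pointwise_def[symmetric])
  then have "openin T {x \<in> topspace T. h x \<in> Rep_pointwise ` V}"
    using assms unfolding continuous_map_def by simp
  moreover have "h x \<in> Rep_pointwise ` V \<longleftrightarrow> Abs_pointwise (h x) \<in> V" for x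
    using Abs_pointwise_inverse[of "h x"] by (force simp: Rep_pointwise_inverse)
  ultimately show "openin T {x \<in> topspace T. Abs_pointwise (h x) \<in> V}" by simp
qed simp

lemma continuous_on_Rep_pointwise_apply: "continuous_on S (\<lambda>z. Rep_pointwise z i)"
  for i :: 'i
proof -
  have "continuous_on UNIV (\<lambda>z. Rep_pointwise z i)"
    unfolding continuous_on_open_vimage[OF open_UNIV]
  proof (intro allI impI)
    fix W :: "real set" assume "open W"
    have "continuous_on UNIV (\<lambda>h :: 'i \<Rightarrow> real. h i)" by (rule continuous_on_product_coordinates)
    with \<open>open W\<close> have "open ((\<lambda>h. h i) -` W)"
      unfolding continuous_on_open_vimage[OF open_UNIV] by simp
    then show "open ((\<lambda>z. Rep_pointwise z i) -` W \<inter> UNIV)"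
      using open_pointwise_vimage[of "(\<lambda>h. h i) -` W"] by (simp add: vimage_def)
  qed
  then show ?thesis by (rule continuous_on_subset) simp
qed

lemma topspace_weak_star_topology: "topspace (weak_star_topology X) = borel_prob_measures X"
proof -
  let ?B = "{{p. (\<integral>x. g x \<partial>p) \<in> U} | g U. continuous_on X g \<and> open (U :: real set)}"
  have "{p. (\<integral>x. 0 \<partial>p) \<in> UNIV} \<in> ?B" by blast
  then have "\<Union>?B = UNIV" by auto
  then show ?thesis unfolding weak_star_topology_def by simp
qed

lemma openin_weak_star_topology:
  fixes g :: "'a::euclidean_space \<Rightarrow> real"
  assumes "continuous_on X g" "open U"
  shows "openin (weak_star_topology X) (borel_prob_measures X \<inter> {p. (\<integral>x. g x \<partial>p) \<in> U})"
proof -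
  let ?B = "{{p. (\<integral>x. g x \<partial>p) \<in> U} | g U. continuous_on X g \<and> open (U :: real set)}"
  have "{p. (\<integral>x. g x \<partial>p) \<in> U} \<in> ?B"
    using assms by blast
  then have "openin (topology_generated_by ?B) {p. (\<integral>x. g x \<partial>p) \<in> U}"
    by (rule topology_generated_by_Basis)
  then show ?thesis unfolding weak_star_topology_def by (rule openin_subtopology_Int2)
qed

text \<open>The weak-star topology need not separate points of its carrier, but continuous real functions
  cannot distinguish measures with the same integrals.\<close>

lemma continuous_map_weak_star_eq:
  assumes PP: "PP \<subseteq> borel_prob_measures X"
    and f: "continuous_map (subtopology (weak_star_topology X) PP) euclideanreal f"
    and pq: "p \<in> PP" "q \<in> PP"
    and same: "\<And>g :: 'a::euclidean_space \<Rightarrow> real. continuous_on X g \<Longrightarrow> (\<integral>x. g x \<partial>p) = (\<integral>x. g x \<partial>q)"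
  shows "f p = f q"
proof (rule ccontr)
  assume "f p \<noteq> f q"
  let ?B = "{{p. (\<integral>x. g x \<partial>p) \<in> U} | g U. continuous_on X g \<and> open (U :: real set)}"
  have sub: "subtopology (weak_star_topology X) PP = subtopology (topology_generated_by ?B) PP"
    unfolding weak_star_topology_def subtopology_subtopology using PP by (simp add: Int_absorb1)
  have "topspace (subtopology (weak_star_topology X) PP) = PP"
    using PP by (simp add: topspace_weak_star_topology Int_absorb1)
  then have "openin (subtopology (weak_star_topology X) PP) {x \<in> PP. f x \<in> - {f q}}"
    using f unfolding continuous_map_def by (metis open_Compl closed_singleton open_openin)
  then obtain W where W: "generate_topology_on ?B W" and "{x \<in> PP. f x \<in> - {f q}} = W \<inter> PP"
    unfolding sub openin_subtopology openin_topology_generated_by_iff by blast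
  with pq \<open>f p \<noteq> f q\<close> have "p \<in> W" "q \<notin> W" by auto
  moreover from W have "p \<in> W \<longleftrightarrow> q \<in> W"
    by (induction rule: generate_topology_on.induct) (auto simp: same)
  ultimately show False by blast
qed

text \<open>The junk value \<open>0\<close> at discontinuous \<open>g\<close> makes every coordinate continuous in the weak-star
  topology.\<close>

definition integral_profile :: "'a::euclidean_space set \<Rightarrow> 'a measure \<Rightarrow> ('a \<Rightarrow> real) pointwise" where
  "integral_profile X p = Abs_pointwise (\<lambda>g. if continuous_on X g then \<integral>x. g x \<partial>p else 0)"

lemma Rep_integral_profile:
  "Rep_pointwise (integral_profile X p) g = (if continuous_on X g then \<integral>x. g x \<partial>p else 0)"
  unfolding integral_profile_def by (simp add: Abs_pointwise_inverse)

lemma continuous_map_integral_profile: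
  assumes PP: "PP \<subseteq> borel_prob_measures X"
  shows "continuous_map (subtopology (weak_star_topology X) PP) euclidean (integral_profile X)"
proof -
  let ?T = "subtopology (weak_star_topology X) PP"
  have topspace: "topspace ?T = PP"
    using PP by (simp add: topspace_weak_star_topology Int_absorb1)
  have coordinate: "continuous_map ?T euclidean (\<lambda>p. \<integral>x. g x \<partial>p)"
    if g: "continuous_on X g" for g :: "'a \<Rightarrow> real"
  proof -
    have "openin ?T {p \<in> PP. (\<integral>x. g x \<partial>p) \<in> U}" if "open U" for U
    proof -
      have "openin ?T (PP \<inter> (borel_prob_measures X \<inter> {p. (\<integral>x. g x \<partial>p) \<in> U}))"
        by (rule openin_subtopology_Int2[OF openin_weak_star_topology[OF g that]])
      moreover have "PP \<inter> (borel_prob_measures X \<inter> {p. (\<integral>x. g x \<partial>p) \<in> U}) = {p \<in> PP. (\<integral>x. g x \<partial>p) \<in> U}"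
        using PP by blast
      ultimately show ?thesis by simp
    qed
    then show ?thesis unfolding continuous_map_def topspace by simp
  qed
  have "continuous_map ?T (product_topology (\<lambda>i. euclidean) UNIV)
      (\<lambda>p (g :: 'a \<Rightarrow> real). if continuous_on X g then \<integral>x. g x \<partial>p else 0)"
    by (intro continuous_map_coordinatewise_then_product) (auto simp: coordinate)
  then show ?thesis
    unfolding integral_profile_def euclidean_product_topology by (rule continuous_map_Abs_pointwise)
qed

lemma compactin_integral_profile_image:
  assumes PP: "PP \<subseteq> borel_prob_measures X" and cpt: "compactin (weak_star_topology X) PP"
    and C: "closedin (subtopology (weak_star_topology X) PP) C"
  shows "compact (integral_profile X ` C)"
proof -
  have "compact_space (subtopology (weak_star_topology X) PP)"
    using compact_space_subtopology[OF cpt] .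
  from closedin_compact_space[OF this C]
  have "compactin (subtopology (weak_star_topology X) PP) C" .
  from image_compactin[OF this continuous_map_integral_profile[OF PP]] show ?thesis
    by (simp add: compactin_euclidean_iff)
qed

lemma compact_integral_profile_image:
  assumes "PP \<subseteq> borel_prob_measures X" "compactin (weak_star_topology X) PP"
  shows "compact (integral_profile X ` PP)"
proof -
  have "topspace (subtopology (weak_star_topology X) PP) = PP"
    using assms(1) by (simp add: topspace_weak_star_topology Int_absorb1)
  then have "closedin (subtopology (weak_star_topology X) PP) PP"
    by (metis closedin_topspace)
  with compactin_integral_profile_image[OF assms] show ?thesis .
qed

text \<open>The profile map is closed (compact domain, Hausdorff target), so \<open>f\<close> descends to a continuous
  function on the image of \<open>PP\<close>.\<close>

lemma integral_profile_factorization: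
  assumes PP: "PP \<subseteq> borel_prob_measures X" and cpt: "compactin (weak_star_topology X) PP"
    and f: "continuous_map (subtopology (weak_star_topology X) PP) euclideanreal f"
  shows "\<exists>F. continuous_on (integral_profile X ` PP) F \<and> (\<forall>p\<in>PP. F (integral_profile X p) = f p)"
proof -
  let ?T = "subtopology (weak_star_topology X) PP"
  let ?\<Phi> = "integral_profile X"
  define F where "F z = f (SOME p. p \<in> PP \<and> ?\<Phi> p = z)" for z
  have F: "F (?\<Phi> p) = f p" if p: "p \<in> PP" for p
  proof -
    have "\<exists>q. q \<in> PP \<and> ?\<Phi> q = ?\<Phi> p" using p by blast
    from someI_ex[OF this] obtain q where "q \<in> PP" "?\<Phi> q = ?\<Phi> p" and Fp: "F (?\<Phi> p) = f q"
      unfolding F_def by blast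
    moreover from this have "(\<integral>x. g x \<partial>q) = (\<integral>x. g x \<partial>p)" if "continuous_on X g" for g :: "'a \<Rightarrow> real"
      using arg_cong[OF \<open>?\<Phi> q = ?\<Phi> p\<close>, of "\<lambda>z. Rep_pointwise z g"] that
      unfolding Rep_integral_profile by simp
    ultimately show ?thesis using continuous_map_weak_star_eq[OF PP f _ p] by metis
  qed
  have "continuous_on (?\<Phi> ` PP) F"
    unfolding continuous_closedin_preimage_eq
  proof (intro allI impI)
    fix C :: "real set" assume "closed C"
    moreover have "topspace ?T = PP"
      using PP by (simp add: topspace_weak_star_topology Int_absorb1)
    ultimately have "closedin ?T {p \<in> PP. f p \<in> C}"
      using closedin_continuous_map_preimage[OF f] by fastforce
    then have "closed (?\<Phi> ` {p \<in> PP. f p \<in> C})"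
      using compactin_integral_profile_image[OF PP cpt] compact_imp_closed by blast
    moreover have "?\<Phi> ` PP \<inter> F -` C = ?\<Phi> ` PP \<inter> ?\<Phi> ` {p \<in> PP. f p \<in> C}"
      using F by auto
    ultimately show "closedin (top_of_set (?\<Phi> ` PP)) (?\<Phi> ` PP \<inter> F -` C)"
      by (simp add: closedin_closed_Int)
  qed
  with F show ?thesis by blast
qed

definition integral_functionals :: "'a::euclidean_space set \<Rightarrow> 'a measure set \<Rightarrow> (('a \<Rightarrow> real) pointwise \<Rightarrow> real) set" where
  "integral_functionals X PP =
     {l. \<exists>g. continuous_on X g \<and> (\<forall>p\<in>PP. l (integral_profile X p) = (\<integral>x. g x \<partial>p))}"

lemma Stone_Weierstrass_integral_functionals:
  fixes X :: "'a::euclidean_space set"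
  assumes X: "compact X" and PP: "PP \<subseteq> borel_prob_measures X"
    and cpt: "compactin (weak_star_topology X) PP"
    and F: "continuous_on (integral_profile X ` PP) F" and e: "e > 0"
  shows "\<exists>L. snd ` set L \<subseteq> integral_functionals X PP \<and>
    (\<forall>z\<in>integral_profile X ` PP. \<bar>F z - exp_sum L z\<bar> < e)"
proof (rule Stone_Weierstrass_exp_sum[OF compact_integral_profile_image[OF PP cpt] _ _ _ _ F e])
  let ?\<Phi> = "integral_profile X" and ?\<Lambda> = "integral_functionals X PP"
  show "(\<lambda>z. 0) \<in> ?\<Lambda>"
    unfolding integral_functionals_def by (intro CollectI exI[of _ "\<lambda>x. 0"]) auto
  show "(\<lambda>z. l z + m z) \<in> ?\<Lambda>" if lm: "l \<in> ?\<Lambda>" "m \<in> ?\<Lambda>" for l m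
  proof -
    obtain g h where g: "continuous_on X g" "\<forall>p\<in>PP. l (?\<Phi> p) = (\<integral>x. g x \<partial>p)"
      and h: "continuous_on X h" "\<forall>p\<in>PP. m (?\<Phi> p) = (\<integral>x. h x \<partial>p)"
      using lm unfolding integral_functionals_def by blast
    have "l (?\<Phi> p) + m (?\<Phi> p) = (\<integral>x. g x + h x \<partial>p)" if p: "p \<in> PP" for p
    proof -
      have "p \<in> borel_prob_measures X" using p PP by blast
      then have "(\<integral>x. g x + h x \<partial>p) = (\<integral>x. g x \<partial>p) + (\<integral>x. h x \<partial>p)"
        by (intro Bochner_Integration.integral_add integrable_continuous_on_borel_prob[OF X] g(1) h(1))
      with g(2) h(2) p show ?thesis by simp
    qed
    moreover have "continuous_on X (\<lambda>x. g x + h x)" using g(1) h(1) by (rule continuous_on_add)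
    ultimately show ?thesis unfolding integral_functionals_def by blast
  qed
  show "continuous_on (?\<Phi> ` PP) l" if l: "l \<in> ?\<Lambda>" for l
  proof -
    obtain g where "continuous_on X g" "\<forall>p\<in>PP. l (?\<Phi> p) = (\<integral>x. g x \<partial>p)"
      using l unfolding integral_functionals_def by blast
    then have "\<And>z. z \<in> ?\<Phi> ` PP \<Longrightarrow> Rep_pointwise z g = l z" by (auto simp: Rep_integral_profile)
    with continuous_on_Rep_pointwise_apply show ?thesis by (rule continuous_on_eq)
  qed
  show "\<exists>l\<in>?\<Lambda>. l z \<noteq> l z'" if zz': "z \<in> ?\<Phi> ` PP" "z' \<in> ?\<Phi> ` PP" "z \<noteq> z'" for z z'
  proof -
    have "Rep_pointwise z \<noteq> Rep_pointwise z'" using zz'(3) by (simp add: Rep_pointwise_inject)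
    then obtain g where g: "Rep_pointwise z g \<noteq> Rep_pointwise z' g" by (auto simp: fun_eq_iff)
    obtain p q where "z = ?\<Phi> p" "z' = ?\<Phi> q" using zz'(1,2) by blast
    with g have "continuous_on X g" by (rule_tac ccontr) (simp add: Rep_integral_profile)
    then have "(\<lambda>z. Rep_pointwise z g) \<in> ?\<Lambda>"
      unfolding integral_functionals_def
      by (intro CollectI exI[of _ g] conjI) (simp_all add: Rep_integral_profile)
    then show ?thesis
    proof
      show "Rep_pointwise z g \<noteq> Rep_pointwise z' g" by (rule g)
    qed
  qed
qed

lemma exp_sum_integral_functionals:
  assumes "snd ` set L \<subseteq> integral_functionals X PP"
  shows "\<exists>L'. (\<forall>(c, g)\<in>set L'. continuous_on X g) \<and>
    (\<forall>p\<in>PP. exp_sum L (integral_profile X p) = (\<Sum>(c, g)\<leftarrow>L'. c * exp (\<integral>x. g x \<partial>p)))"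
  using assms
proof (induction L)
  case (Cons a L)
  obtain c l where a: "a = (c, l)" by (cases a)
  have "snd ` set L \<subseteq> integral_functionals X PP" using Cons.prems by simp
  then obtain L' where L': "\<forall>(c, g)\<in>set L'. continuous_on X g"
    "\<forall>p\<in>PP. exp_sum L (integral_profile X p) = (\<Sum>(c, g)\<leftarrow>L'. c * exp (\<integral>x. g x \<partial>p))"
    using Cons.IH by blast
  obtain g where "continuous_on X g" "\<forall>p\<in>PP. l (integral_profile X p) = (\<integral>x. g x \<partial>p)"
    using Cons.prems unfolding a integral_functionals_def by auto
  with L' show ?case unfolding a by (intro exI[of _ "(c, g) # L'"]) auto
qed (intro exI[of _ "[]"], simp)

lemma exp_integral_sum_approx:
  fixes X :: "'a::euclidean_space set"
  assumes X: "compact X" and PP: "PP \<subseteq> borel_prob_measures X"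
    and cpt: "compactin (weak_star_topology X) PP"
    and f: "continuous_map (subtopology (weak_star_topology X) PP) euclideanreal f" and e: "e > 0"
  shows "\<exists>L. (\<forall>(c, g)\<in>set L. continuous_on X g) \<and>
    (\<forall>p\<in>PP. \<bar>f p - (\<Sum>(c, g)\<leftarrow>L. c * exp (\<integral>x. g x \<partial>p))\<bar> < e)"
proof -
  obtain F where F: "continuous_on (integral_profile X ` PP) F" "\<forall>p\<in>PP. F (integral_profile X p) = f p"
    using integral_profile_factorization[OF PP cpt f] by blast
  obtain L where L: "snd ` set L \<subseteq> integral_functionals X PP"
    and F_approx: "\<forall>z\<in>integral_profile X ` PP. \<bar>F z - exp_sum L z\<bar> < e"
    using Stone_Weierstrass_integral_functionals[OF X PP cpt F(1) e] by blast
  obtain L' where L': "\<forall>(c, g)\<in>set L'. continuous_on X g"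
    "\<forall>p\<in>PP. exp_sum L (integral_profile X p) = (\<Sum>(c, g)\<leftarrow>L'. c * exp (\<integral>x. g x \<partial>p))"
    using exp_sum_integral_functionals[OF L] by blast
  have "\<bar>f p - (\<Sum>(c, g)\<leftarrow>L'. c * exp (\<integral>x. g x \<partial>p))\<bar> < e" if p: "p \<in> PP" for p
    using F_approx[rule_format, of "integral_profile X p"] F(2) L'(2) p by simp
  with L'(1) show ?thesis by blast
qed

theorem corollary1:
  fixes X :: "'a::euclidean_space set"
    and PP :: "'a measure set"
    and \<sigma> :: "real \<Rightarrow> real"
    and f :: "'a measure \<Rightarrow> real"
    and \<epsilon> :: real
  assumes "compact X"
    and "PP \<subseteq> borel_prob_measures X"
    and "compactin (weak_star_topology X) PP"
    and "continuous_on UNIV \<sigma>"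
    and "\<not> is_polynomial_fun \<sigma>"
    and "continuous_map (subtopology (weak_star_topology X) PP) euclideanreal f"
    and "\<epsilon> > 0"
  shows "\<exists>(k::nat) (m::nat) (W3 :: nat \<Rightarrow> 'a) (b3 :: nat \<Rightarrow> real)
            (W2 :: nat \<Rightarrow> nat \<Rightarrow> real) (b2 :: nat \<Rightarrow> real) (w1 :: nat \<Rightarrow> real) (b1 :: real).
           \<exists>\<delta> < \<epsilon>. \<forall>p\<in>PP.
             \<bar>f p - ((\<Sum>j<m. w1 j * \<sigma> ((\<Sum>i<k. W2 j i * (\<integral>x. \<sigma> (W3 i \<bullet> x + b3 i) \<partial>p)) + b2 j)) + b1)\<bar> \<le> \<delta>"
proof -
  have "\<epsilon> / 2 > 0" "\<epsilon> / 4 > 0" using assms(7) by simp_all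
  obtain L where L: "\<forall>(c, g)\<in>set L. continuous_on X g"
    and f_approx: "\<forall>p\<in>PP. \<bar>f p - (\<Sum>(c, g)\<leftarrow>L. c * exp (\<integral>x. g x \<partial>p))\<bar> < \<epsilon> / 2"
    using exp_integral_sum_approx[OF assms(1,2,3,6) \<open>\<epsilon> / 2 > 0\<close>] by blast
  obtain G where G: "is_measure_net \<sigma> G"
    and G_approx: "\<forall>p\<in>borel_prob_measures X. \<bar>(\<Sum>(c, g)\<leftarrow>L. c * exp (\<integral>x. g x \<partial>p)) - G p\<bar> < \<epsilon> / 4"
    using measure_net_approx_exp_integral_sum[OF assms(1,4,5) L \<open>\<epsilon> / 4 > 0\<close>] by blast
  obtain k m W3 b3 W2 b2 w1 b1 where G_def: "G = measure_net \<sigma> k m W3 b3 W2 b2 w1 b1"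
    using G unfolding is_measure_net_def by blast
  have "\<bar>f p - measure_net \<sigma> k m W3 b3 W2 b2 w1 b1 p\<bar> \<le> 3 * \<epsilon> / 4" if "p \<in> PP" for p
  proof -
    let ?S = "\<Sum>(c, g)\<leftarrow>L. c * exp (\<integral>x. g x \<partial>p)"
    have "\<bar>f p - ?S\<bar> < \<epsilon> / 2" "\<bar>?S - G p\<bar> < \<epsilon> / 4"
      using f_approx G_approx that assms(2) by blast+
    then show ?thesis
      using abs_triangle_ineq[of "f p - ?S" "?S - G p"] unfolding G_def by simp
  qed
  moreover have "3 * \<epsilon> / 4 < \<epsilon>" using assms(7) by simp
  ultimately show ?thesis unfolding measure_net_def by blast
qed

end
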